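(* Let $G$ be a compact Abelian group with unit $e$ and continuous length function $l$; let $(H_n)_{n\in\mathbb{N}}$ be closed subgroups converging to $G$ in the Hausdorff distance of $d_l(g,g')=l(g^{-1}g')$; let $H_\infty=G$, $\lambda_n$ the Haar probability measure on $H_n$, $J_n$ the annihilator of $H_n$ in $\widehat G$, $q_n:\widehat G\to\widehat{H_n}=\widehat G/J_n$; let $\sigma_n$ be skew bicharacters of $\widehat{H_n}$ ($n\in\mathbb{N}\cup\{\infty\}$) whose lifts $\sigma_n'(\chi,\chi')=\sigma_n(q_n\chi,q_n\chi')$ converge pointwise to $\sigma_\infty$; let $\|\cdot\|_n$ be the norm of $C^*(\widehat{H_n},\sigma_n)$. Let $\varepsilon>0$ and let $\varphi_\varepsilon$ be a finite linear combination of characters of $G$ with $\varphi_\varepsilon\ge0$, $\int_G\varphi_\varepsilon d\lambda_\infty=1$ and $\int_G\varphi_\varepsilon l\,d\lambda_\infty\le\varepsilon/(3(1+\varepsilon))$; let $B\subseteq\widehat G$ be the finite set of characters with nonzero coefficient in $\varphi_\varepsilon$, $V_\varepsilon=\{f\in C_c(\widehat G):\operatorname{supp}f\subseteq B,\ f=f^*\text{ in }C^*(\widehat G,\sigma_\infty)\}$, $N_\varepsilon\in\mathbb{N}$ such that for $n\ge N_\varepsilon$, $q_n$ is injective on $B$ and $\int_{H_n}\varphi_\varepsilon d\lambda_n\ge(1+\varepsilon)^{-1}$, and for $n\ge N_\varepsilon$ let $\theta_n(f)(q_n(h))=\sum_{j\in J_n}f(hj)$, with $\theta_\infty=\mathrm{Id}$.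 Then for every $a\in V_\varepsilon$, $\lim_{n\to\infty}\|\theta_n(a)\|_n=\|a\|_\infty$.
   Context: Length function: $l\ge0$, $l(g)=0$ iff $g=e$, symmetric, subadditive. Skew bicharacter: bicharacter $\sigma$ of a discrete Abelian group with $\sigma(\chi,\chi)=1$. $C^*(\Gamma,\sigma)$: twisted group C*-algebra (completion of $C_c(\Gamma)$ with twisted convolution $(f*g)(\chi)=\sum_{\chi'}f(\chi')g(\chi'^{-1}\chi)\sigma(\chi',\chi'^{-1}\chi)$ and involution $f^*(\chi)=\sigma(\chi,\chi^{-1})\overline{f(\chi^{-1})}$). *)

theory Defs
  imports "HOL-Probability.Probability"
begin

definition length_fun :: "('g::{ab_group_add,topological_space} \<Rightarrow> real) \<Rightarrow> bool" where
  "length_fun l \<longleftrightarrow> (\<forall>g. l g \<ge> 0) \<and> (\<forall>g. l g = 0 \<longleftrightarrow> g = 0) \<and> (\<forall>g. l (- g) = l g)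
     \<and> (\<forall>g h. l (g + h) \<le> l g + l h)"

definition hausdorff_dl :: "('g::ab_group_add \<Rightarrow> real) \<Rightarrow> 'g set \<Rightarrow> 'g set \<Rightarrow> real" where
  "hausdorff_dl l A B = max (SUP a\<in>A. INF b\<in>B. l (- a + b)) (SUP b\<in>B. INF a\<in>A. l (- a + b))"

definition is_subgroup :: "'g::ab_group_add set \<Rightarrow> bool" where
  "is_subgroup H \<longleftrightarrow> 0 \<in> H \<and> (\<forall>x\<in>H. \<forall>y\<in>H. x + y \<in> H) \<and> (\<forall>x\<in>H. - x \<in> H)"

definition haar_prob :: "'g::{ab_group_add,topological_space} set \<Rightarrow> 'g measure \<Rightarrow> bool" where
  "haar_prob H M \<longleftrightarrow> prob_space M \<and> space M = H \<and> sets M = sets (restrict_space borel H)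
     \<and> (\<forall>h\<in>H. \<forall>A\<in>sets M. emeasure M ((\<lambda>x. h + x) ` A) = emeasure M A)"

definition dual_group :: "('g::{ab_group_add,topological_space} \<Rightarrow> complex) set" where
  "dual_group = {\<kappa>. continuous_on UNIV \<kappa> \<and> (\<forall>x. cmod (\<kappa> x) = 1)
                    \<and> (\<forall>x y. \<kappa> (x + y) = \<kappa> x * \<kappa> y)}"

definition annihilator :: "'g::{ab_group_add,topological_space} set \<Rightarrow> ('g \<Rightarrow> complex) set" where
  "annihilator H = {\<kappa>\<in>dual_group. \<forall>h\<in>H. \<kappa> h = 1}"

text \<open>Quotient map q_H : dual G \<rightarrow> dual G / J_H, realised as restriction of characters to H.
  With H = UNIV it is the identity.\<close>
definition qmap :: "'g set \<Rightarrow> ('g \<Rightarrow> complex) \<Rightarrow> ('g \<Rightarrow> complex)" where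
  "qmap H \<kappa> = restrict \<kappa> H"

definition qdual :: "'g::{ab_group_add,topological_space} set \<Rightarrow> ('g \<Rightarrow> complex) set" where
  "qdual H = qmap H ` dual_group"

definition chmul :: "'g set \<Rightarrow> ('g \<Rightarrow> complex) \<Rightarrow> ('g \<Rightarrow> complex) \<Rightarrow> ('g \<Rightarrow> complex)" where
  "chmul H \<kappa> \<psi> = restrict (\<lambda>x. \<kappa> x * \<psi> x) H"

definition chinv :: "'g set \<Rightarrow> ('g \<Rightarrow> complex) \<Rightarrow> ('g \<Rightarrow> complex)" where
  "chinv H \<kappa> = restrict (\<lambda>x. cnj (\<kappa> x)) H"

definition skew_bichar :: "'c set \<Rightarrow> ('c \<Rightarrow> 'c \<Rightarrow> 'c) \<Rightarrow> ('c \<Rightarrow> 'c \<Rightarrow> complex) \<Rightarrow> bool" where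
  "skew_bichar \<Gamma> mul \<sigma> \<longleftrightarrow>
     (\<forall>x\<in>\<Gamma>. \<forall>y\<in>\<Gamma>. cmod (\<sigma> x y) = 1)
   \<and> (\<forall>x\<in>\<Gamma>. \<forall>y\<in>\<Gamma>. \<forall>z\<in>\<Gamma>. \<sigma> (mul x y) z = \<sigma> x z * \<sigma> y z)
   \<and> (\<forall>x\<in>\<Gamma>. \<forall>y\<in>\<Gamma>. \<forall>z\<in>\<Gamma>. \<sigma> x (mul y z) = \<sigma> x y * \<sigma> x z)
   \<and> (\<forall>x\<in>\<Gamma>. \<sigma> x x = 1)"

definition twconv :: "'c set \<Rightarrow> ('c \<Rightarrow> 'c \<Rightarrow> 'c) \<Rightarrow> ('c \<Rightarrow> 'c) \<Rightarrow> ('c \<Rightarrow> 'c \<Rightarrow> complex)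
     \<Rightarrow> ('c \<Rightarrow> complex) \<Rightarrow> ('c \<Rightarrow> complex) \<Rightarrow> 'c \<Rightarrow> complex" where
  "twconv \<Gamma> mul iv \<sigma> f g x =
     (if x \<in> \<Gamma> then (\<Sum>y\<in>{y\<in>\<Gamma>. f y \<noteq> 0}. f y * g (mul (iv y) x) * \<sigma> y (mul (iv y) x)) else 0)"

definition fin_supp :: "'c set \<Rightarrow> ('c \<Rightarrow> complex) \<Rightarrow> bool" where
  "fin_supp \<Gamma> f \<longleftrightarrow> finite {x. f x \<noteq> 0} \<and> {x. f x \<noteq> 0} \<subseteq> \<Gamma>"

definition l2norm :: "('c \<Rightarrow> complex) \<Rightarrow> real" where
  "l2norm \<xi> = sqrt (\<Sum>x\<in>{x. \<xi> x \<noteq> 0}. (cmod (\<xi> x))\<^sup>2)"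

text \<open>Norm of C*(\<Gamma>,\<sigma>) on C_c(\<Gamma>): operator norm of the twisted left regular
  representation on l^2(\<Gamma>) (computed on the dense subspace of finitely supported vectors).
  For abelian (amenable) \<Gamma> this is the (full = reduced) C*-norm.\<close>
definition twisted_cstar_norm :: "'c set \<Rightarrow> ('c \<Rightarrow> 'c \<Rightarrow> 'c) \<Rightarrow> ('c \<Rightarrow> 'c) \<Rightarrow> ('c \<Rightarrow> 'c \<Rightarrow> complex)
     \<Rightarrow> ('c \<Rightarrow> complex) \<Rightarrow> real" where
  "twisted_cstar_norm \<Gamma> mul iv \<sigma> f =
     (SUP \<xi>\<in>{\<xi>. fin_supp \<Gamma> \<xi> \<and> l2norm \<xi> \<le> 1}. l2norm (twconv \<Gamma> mul iv \<sigma> f \<xi>))"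

definition twstar :: "('c \<Rightarrow> 'c) \<Rightarrow> ('c \<Rightarrow> 'c \<Rightarrow> complex) \<Rightarrow> ('c \<Rightarrow> complex) \<Rightarrow> 'c \<Rightarrow> complex" where
  "twstar iv \<sigma> f x = \<sigma> x (iv x) * cnj (f (iv x))"

text \<open>\<theta>_H(f)(q_H(h)) = sum over j in J_H of f(hj), i.e. the sum of f over the fibre of q_H.\<close>
definition theta :: "'g::{ab_group_add,topological_space} set \<Rightarrow> (('g \<Rightarrow> complex) \<Rightarrow> complex)
     \<Rightarrow> ('g \<Rightarrow> complex) \<Rightarrow> complex" where
  "theta H f \<psi> = (if \<psi> \<in> qdual H
      then (\<Sum>\<kappa>\<in>{\<kappa>\<in>dual_group. qmap H \<kappa> = \<psi> \<and> f \<kappa> \<noteq> 0}. f \<kappa>) else 0)"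

end

theory Submission
  imports Defs "HOL-Real_Asymp.Real_Asymp"
begin

text \<open>
  Pulling the twists \<open>\<sigma>\<^sub>n\<close> back along the restriction maps \<open>q\<^sub>n\<close>, all the twisted group algebras
  live on the dual group of \<open>G\<close>, and \<open>\<theta>\<^sub>n\<close> becomes the pushforward along \<open>q\<^sub>n\<close>, which is a
  homomorphism of twisted convolution algebras.

  Lower bound: the norm of \<open>a\<close> for \<open>\<sigma>\<^sub>\<infinity>\<close> is nearly attained at a finitely supported unit vector
  \<open>\<xi>\<close>. The convolutions of \<open>a\<close> and \<open>\<xi>\<close> for the pulled back twists converge to the one for \<open>\<sigma>\<^sub>\<infinity>\<close>,
  and once \<open>q\<^sub>n\<close> is injective on the finitely many characters involved, pushing forward is
  isometric on them. Injectivity holds eventually because two distinct characters differ on a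
  nonempty open set, which \<open>H\<^sub>n\<close> eventually meets as \<open>H\<^sub>n\<close> converges to \<open>G\<close>.

  Upper bound: since \<open>a\<close> is self-adjoint, iterating the \<open>C\<^sup>*\<close>-identity bounds the \<open>2\<^sup>j\<close>-th power of
  the norm of \<open>\<theta>\<^sub>n(a)\<close> by the \<open>l\<^sup>1\<close>-norm of the \<open>2\<^sup>j\<close>-th convolution power of \<open>a\<close> for the pulled
  back twist, and these \<open>l\<^sup>1\<close>-norms converge to the one for \<open>\<sigma>\<^sub>\<infinity>\<close>. As the dual group is Abelian,
  the \<open>m\<close>-th power of \<open>a\<close> is supported on at most \<open>(m + 1) ^ card B\<close> characters, so by
  Cauchy-Schwarz its \<open>l\<^sup>1\<close>-norm is at most \<open>sqrt ((m + 1) ^ card B)\<close> times the \<open>m\<close>-th power of the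
  norm of \<open>a\<close>; the polynomial factor disappears under the \<open>2\<^sup>j\<close>-th root.
\<close>

section \<open>Finitely supported functions\<close>

definition supp :: "('c \<Rightarrow> 'a::zero) \<Rightarrow> 'c set" where
  "supp f = {x. f x \<noteq> 0}"

definition l1_norm :: "('c \<Rightarrow> complex) \<Rightarrow> real" where
  "l1_norm f = (\<Sum>x\<in>supp f. cmod (f x))"

definition l2_inner :: "('c \<Rightarrow> complex) \<Rightarrow> ('c \<Rightarrow> complex) \<Rightarrow> complex" where
  "l2_inner u v = (\<Sum>x\<in>supp u. u x * cnj (v x))"

lemma fin_supp_iff: "fin_supp \<Gamma> f \<longleftrightarrow> finite (supp f) \<and> supp f \<subseteq> \<Gamma>"
  by (simp add: fin_supp_def supp_def)

lemma l2norm_eq_sum: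
  assumes "finite A" "supp u \<subseteq> A"
  shows "l2norm u = sqrt (\<Sum>x\<in>A. (cmod (u x))\<^sup>2)"
proof -
  have "(\<Sum>x\<in>{x. u x \<noteq> 0}. (cmod (u x))\<^sup>2) = (\<Sum>x\<in>A. (cmod (u x))\<^sup>2)"
    using assms by (intro sum.mono_neutral_left) (auto simp: supp_def)
  then show ?thesis unfolding l2norm_def by simp
qed

lemma l2norm_eq_L2_set: "finite A \<Longrightarrow> supp u \<subseteq> A \<Longrightarrow> l2norm u = L2_set (\<lambda>x. cmod (u x)) A"
  by (simp add: l2norm_eq_sum L2_set_def)

lemma l1_norm_eq_sum: "finite A \<Longrightarrow> supp u \<subseteq> A \<Longrightarrow> l1_norm u = (\<Sum>x\<in>A. cmod (u x))"
  unfolding l1_norm_def by (intro sum.mono_neutral_left) (auto simp: supp_def)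

lemma l2norm_nonneg: "0 \<le> l2norm u"
  unfolding l2norm_def by (simp add: sum_nonneg)

lemma l1_norm_nonneg: "0 \<le> l1_norm u"
  unfolding l1_norm_def by (simp add: sum_nonneg)

lemma l2norm_zero [simp]: "l2norm (\<lambda>_. 0) = 0"
  by (simp add: l2norm_def)

lemma l2norm_scale:
  assumes "finite (supp u)"
  shows "l2norm (\<lambda>x. c * u x) = cmod c * l2norm u"
proof -
  have "l2norm (\<lambda>x. c * u x) = sqrt ((cmod c)\<^sup>2 * (\<Sum>x\<in>supp u. (cmod (u x))\<^sup>2))"
    using assms by (subst l2norm_eq_sum[of "supp u"])
      (auto simp: supp_def norm_mult power_mult_distrib sum_distrib_left)
  also have "\<dots> = cmod c * l2norm u"
    using assms by (simp add: real_sqrt_mult l2norm_eq_sum[of "supp u"])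
  finally show ?thesis .
qed

lemma l2norm_eq_0D:
  assumes "finite (supp u)" "l2norm u = 0"
  shows "u = (\<lambda>_. 0)"
proof -
  have "L2_set (\<lambda>x. cmod (u x)) (supp u) = 0"
    using assms by (simp add: l2norm_eq_L2_set)
  then show ?thesis using assms(1) by (auto simp: L2_set_eq_0_iff supp_def)
qed

lemma l1_norm_le_sqrt_card_l2norm:
  assumes "finite A" "supp u \<subseteq> A"
  shows "l1_norm u \<le> sqrt (card A) * l2norm u"
proof -
  have "l1_norm u = (\<Sum>x\<in>A. \<bar>1\<bar> * \<bar>cmod (u x)\<bar>)"
    using assms by (simp add: l1_norm_eq_sum)
  also have "\<dots> \<le> L2_set (\<lambda>_. 1) A * L2_set (\<lambda>x. cmod (u x)) A"
    by (rule L2_set_mult_ineq)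
  also have "\<dots> = sqrt (card A) * l2norm u"
    using assms by (simp add: L2_set_constant l2norm_eq_L2_set)
  finally show ?thesis .
qed

lemma L2_set_sum_le: "L2_set (\<lambda>x. \<Sum>k\<in>K. F k x) A \<le> (\<Sum>k\<in>K. L2_set (F k) A)"
proof (induction K rule: infinite_finite_induct)
  case (insert k K)
  have "L2_set (\<lambda>x. \<Sum>k\<in>insert k K. F k x) A \<le> L2_set (F k) A + L2_set (\<lambda>x. \<Sum>k\<in>K. F k x) A"
    using insert.hyps by (simp add: L2_set_triangle_ineq)
  also have "\<dots> \<le> (\<Sum>k\<in>insert k K. L2_set (F k) A)"
    using insert by simp
  finally show ?case .
qed (simp_all add: L2_set_def)

lemma l2_inner_eq_sum:
  assumes "finite A" "finite (supp u)" "supp u \<inter> supp v \<subseteq> A"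
  shows "l2_inner u v = (\<Sum>x\<in>A. u x * cnj (v x))"
proof -
  have "l2_inner u v = (\<Sum>x\<in>supp u \<inter> A. u x * cnj (v x))"
    unfolding l2_inner_def using assms by (intro sum.mono_neutral_right) (auto simp: supp_def)
  also have "\<dots> = (\<Sum>x\<in>A. u x * cnj (v x))"
    using assms by (intro sum.mono_neutral_left) (auto simp: supp_def)
  finally show ?thesis .
qed

lemma l2_inner_self:
  assumes "finite (supp u)"
  shows "l2_inner u u = of_real ((l2norm u)\<^sup>2)"
proof -
  have "l2_inner u u = (\<Sum>x\<in>supp u. of_real ((cmod (u x))\<^sup>2))"
    unfolding l2_inner_def by (simp only: complex_norm_square)
  then show ?thesis using assms by (simp add: l2norm_eq_sum[of "supp u"] sum_nonneg)
qed

lemma l2_inner_Cauchy_Schwarz: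
  assumes "finite (supp u)" "finite (supp v)"
  shows "cmod (l2_inner u v) \<le> l2norm u * l2norm v"
proof -
  let ?A = "supp u \<union> supp v"
  have "l2_inner u v = (\<Sum>x\<in>?A. u x * cnj (v x))"
    using assms by (intro l2_inner_eq_sum) auto
  then have "cmod (l2_inner u v) \<le> (\<Sum>x\<in>?A. cmod (u x * cnj (v x)))"
    by (simp only: norm_sum)
  also have "\<dots> = (\<Sum>x\<in>?A. \<bar>cmod (u x)\<bar> * \<bar>cmod (v x)\<bar>)"
    by (simp add: norm_mult)
  also have "\<dots> \<le> L2_set (\<lambda>x. cmod (u x)) ?A * L2_set (\<lambda>x. cmod (v x)) ?A"
    by (rule L2_set_mult_ineq)
  also have "\<dots> = l2norm u * l2norm v"
    using assms l2norm_eq_L2_set[of ?A u] l2norm_eq_L2_set[of ?A v] by simp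
  finally show ?thesis .
qed

lemma sum_reindex_bij_betw_vanishing:
  assumes h: "bij_betw h G G" and A: "finite A" "A \<subseteq> G" and B: "finite B" "B \<subseteq> G"
    and "\<And>x. x \<in> G \<Longrightarrow> x \<notin> A \<Longrightarrow> F x = 0" and "\<And>x. x \<in> G \<Longrightarrow> x \<notin> B \<Longrightarrow> F (h x) = 0"
  shows "(\<Sum>x\<in>A. F x) = (\<Sum>x\<in>B. F (h x))"
proof -
  have "(\<Sum>x\<in>A. F x) = (\<Sum>x\<in>{x\<in>G. F x \<noteq> 0}. F x)"
    using assms by (intro sum.mono_neutral_right) auto
  also have "\<dots> = (\<Sum>x\<in>{x\<in>G. F (h x) \<noteq> 0}. F (h x))"
    using h by (intro sum.reindex_bij_betw[symmetric]) (auto simp: bij_betw_def inj_on_def)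
  also have "\<dots> = (\<Sum>x\<in>B. F (h x))"
    using assms by (intro sum.mono_neutral_left) auto
  finally show ?thesis .
qed

lemma
  assumes "finite A" "\<And>n. supp (u n) \<subseteq> A" "supp v \<subseteq> A"
    and "\<And>x. x \<in> A \<Longrightarrow> (\<lambda>n. u n x) \<longlonglongrightarrow> v x"
  shows tendsto_l1_norm_common_support: "(\<lambda>n. l1_norm (u n)) \<longlonglongrightarrow> l1_norm v"
    and tendsto_l2norm_common_support: "(\<lambda>n. l2norm (u n)) \<longlonglongrightarrow> l2norm v"
  using assms by (simp_all add: l1_norm_eq_sum[of A] l2norm_eq_sum[of A]
      tendsto_sum tendsto_norm tendsto_real_sqrt tendsto_power)

lemma tendsto_twconv:
  assumes "finite {y\<in>\<Gamma>. f y \<noteq> 0}"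
    and "\<And>y x. y \<in> \<Gamma> \<Longrightarrow> x \<in> \<Gamma> \<Longrightarrow> mul (iv y) x \<in> \<Gamma>"
    and "\<And>x y. x \<in> \<Gamma> \<Longrightarrow> y \<in> \<Gamma> \<Longrightarrow> (\<lambda>n. \<tau> n x y) \<longlonglongrightarrow> \<sigma> x y"
    and "\<And>x. x \<in> \<Gamma> \<Longrightarrow> (\<lambda>n. g n x) \<longlonglongrightarrow> h x"
  shows "(\<lambda>n. twconv \<Gamma> mul iv (\<tau> n) f (g n) x) \<longlonglongrightarrow> twconv \<Gamma> mul iv \<sigma> f h x"
  unfolding twconv_def using assms by (auto intro!: tendsto_sum tendsto_mult)

section \<open>Abelian groups on a carrier set\<close>

locale abelian_group_on =
  fixes G :: "'c set" and mul :: "'c \<Rightarrow> 'c \<Rightarrow> 'c" and iv :: "'c \<Rightarrow> 'c" and e :: 'c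
  assumes e_in [simp]: "e \<in> G"
    and mul_in [simp]: "x \<in> G \<Longrightarrow> y \<in> G \<Longrightarrow> mul x y \<in> G"
    and iv_in [simp]: "x \<in> G \<Longrightarrow> iv x \<in> G"
    and mul_assoc: "x \<in> G \<Longrightarrow> y \<in> G \<Longrightarrow> z \<in> G \<Longrightarrow> mul (mul x y) z = mul x (mul y z)"
    and mul_comm: "x \<in> G \<Longrightarrow> y \<in> G \<Longrightarrow> mul x y = mul y x"
    and e_mul [simp]: "x \<in> G \<Longrightarrow> mul e x = x"
    and iv_mul_self [simp]: "x \<in> G \<Longrightarrow> mul (iv x) x = e"
begin

lemma mul_e [simp]: "x \<in> G \<Longrightarrow> mul x e = x"
  using mul_comm[of x e] by simp

lemma mul_iv_self [simp]: "x \<in> G \<Longrightarrow> mul x (iv x) = e"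
  using mul_comm[of x "iv x"] by simp

lemma mul_iv_cancel_left [simp]: "x \<in> G \<Longrightarrow> y \<in> G \<Longrightarrow> mul y (mul (iv y) x) = x"
  using mul_assoc[of y "iv y" x] by simp

lemma iv_mul_cancel_left [simp]: "x \<in> G \<Longrightarrow> y \<in> G \<Longrightarrow> mul (iv y) (mul y x) = x"
  using mul_assoc[of "iv y" y x] by simp

lemma mul_left_commute: "x \<in> G \<Longrightarrow> y \<in> G \<Longrightarrow> z \<in> G \<Longrightarrow> mul x (mul y z) = mul y (mul x z)"
  by (metis mul_assoc mul_comm)

lemma iv_unique:
  assumes "x \<in> G" "y \<in> G" "mul x y = e"
  shows "x = iv y"
  using assms mul_iv_cancel_left[of x "iv y"] mul_assoc[of x y "iv y"] by simp

lemma iv_iv [simp]: "x \<in> G \<Longrightarrow> iv (iv x) = x"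
  using iv_unique[of x "iv x"] by simp

lemma iv_e [simp]: "iv e = e"
  using iv_unique[of e e] by simp

lemma iv_mul_distrib: "x \<in> G \<Longrightarrow> y \<in> G \<Longrightarrow> iv (mul x y) = mul (iv x) (iv y)"
  by (rule iv_unique[symmetric]) (simp_all add: mul_assoc mul_left_commute[of "iv y" x])

lemma bij_betw_mul_left: "y \<in> G \<Longrightarrow> bij_betw (mul y) G G"
  by (rule bij_betw_byWitness[where f' = "mul (iv y)"]) auto

lemma bij_betw_iv: "bij_betw iv G G"
  by (rule bij_betw_byWitness[where f' = iv]) auto

definition set_mul :: "'c set \<Rightarrow> 'c set \<Rightarrow> 'c set" where
  "set_mul A B = (\<lambda>(x, y). mul x y) ` (A \<times> B)"

lemma mul_in_set_mul: "x \<in> A \<Longrightarrow> y \<in> B \<Longrightarrow> mul x y \<in> set_mul A B"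
  unfolding set_mul_def by force

lemma set_mulE:
  assumes "z \<in> set_mul A B"
  obtains x y where "x \<in> A" "y \<in> B" "z = mul x y"
  using assms unfolding set_mul_def by auto

lemma finite_set_mul: "finite A \<Longrightarrow> finite B \<Longrightarrow> finite (set_mul A B)"
  by (simp add: set_mul_def)

lemma set_mul_subset: "A \<subseteq> G \<Longrightarrow> B \<subseteq> G \<Longrightarrow> set_mul A B \<subseteq> G"
  by (blast elim!: set_mulE intro: mul_in)

primrec products :: "'c set \<Rightarrow> nat \<Rightarrow> 'c set" where
  "products A 0 = {e}"
| "products A (Suc m) = set_mul A (products A m)"

lemma finite_products: "finite A \<Longrightarrow> finite (products A m)"
  by (induction m) (simp_all add: finite_set_mul)

lemma products_subset: "A \<subseteq> G \<Longrightarrow> products A m \<subseteq> G"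
  by (induction m) (simp_all add: set_mul_subset)

definition gpow :: "'c \<Rightarrow> nat \<Rightarrow> 'c" where
  "gpow x i = (mul x ^^ i) e"

lemma gpow_0 [simp]: "gpow x 0 = e" and gpow_Suc: "gpow x (Suc i) = mul x (gpow x i)"
  by (simp_all add: gpow_def)

lemma gpow_in [simp]: "x \<in> G \<Longrightarrow> gpow x i \<in> G"
  by (induction i) (simp_all add: gpow_Suc)

lemma products_insert_decompose:
  assumes "b \<in> G" "A \<subseteq> G" "x \<in> products (insert b A) m"
  shows "\<exists>i\<le>m. \<exists>v\<in>products A (m - i). x = mul (gpow b i) v"
  using assms(3)
proof (induction m arbitrary: x)
  case 0
  then show ?case by simp
next
  case (Suc m)
  from Suc.prems obtain y u where y: "y \<in> insert b A" and u: "u \<in> products (insert b A) m"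
    and x: "x = mul y u"
    by (auto elim!: set_mulE)
  obtain i v where i: "i \<le> m" and v: "v \<in> products A (m - i)" and u_eq: "u = mul (gpow b i) v"
    using Suc.IH[OF u] by blast
  have vG: "v \<in> G" using v products_subset[OF assms(2)] by blast
  show ?case
  proof (cases "y = b")
    case True
    then have "x = mul (gpow b (Suc i)) v"
      using x u_eq assms(1) vG by (simp add: gpow_Suc mul_assoc)
    then show ?thesis using i v by force
  next
    case False
    then have yA: "y \<in> A" using y by simp
    then have "x = mul (gpow b i) (mul y v)"
      using x u_eq assms vG by (auto simp: mul_left_commute)
    moreover have "mul y v \<in> products A (Suc m - i)"
      using yA v i by (simp add: Suc_diff_le mul_in_set_mul)
    ultimately show ?thesis using i by (metis le_SucI)
  qed
qed

lemma card_products_le: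
  assumes "finite A" "A \<subseteq> G"
  shows "card (products A m) \<le> (m + 1) ^ card A"
  using assms
proof (induction A arbitrary: m rule: finite_induct)
  case empty
  have "products {} m \<subseteq> {e}" by (cases m) (auto simp: set_mul_def)
  then show ?case by (simp add: card_mono[of "{e}", simplified])
next
  case (insert b A)
  have "products (insert b A) m \<subseteq> (\<Union>i\<le>m. mul (gpow b i) ` products A (m - i))"
    using products_insert_decompose[of b A] insert.prems by fast
  then have "card (products (insert b A) m)
      \<le> card (\<Union>i\<le>m. mul (gpow b i) ` products A (m - i))"
    using insert.hyps by (intro card_mono) (auto simp: finite_products)
  also have "\<dots> \<le> (\<Sum>i\<le>m. card (mul (gpow b i) ` products A (m - i)))"
    by (rule card_UN_le) simp
  also have "\<dots> \<le> (\<Sum>i\<le>m. card (products A (m - i)))"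
    by (intro sum_mono card_image_le) (simp add: insert.hyps finite_products)
  also have "\<dots> \<le> (\<Sum>i\<le>m. (m + 1) ^ card A)"
  proof (intro sum_mono)
    fix i
    have "card (products A (m - i)) \<le> (m - i + 1) ^ card A"
      using insert by simp
    also have "\<dots> \<le> (m + 1) ^ card A" by (simp add: power_mono)
    finally show "card (products A (m - i)) \<le> (m + 1) ^ card A" .
  qed
  also have "\<dots> = (m + 1) ^ card (insert b A)"
    using insert.hyps by simp
  finally show ?case .
qed

end

section \<open>Skew bicharacters and twisted convolution\<close>

lemma unimodular_mult_cnj: "cmod z = 1 \<Longrightarrow> z * cnj z = 1"
  using complex_norm_square[of z] by simp

locale twisted_abelian_group = abelian_group_on G mul iv e
  for G :: "'c set" and mul iv e +
  fixes \<sigma> :: "'c \<Rightarrow> 'c \<Rightarrow> complex"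
  assumes skew: "skew_bichar G mul \<sigma>"
begin

lemma twist_norm: "x \<in> G \<Longrightarrow> y \<in> G \<Longrightarrow> cmod (\<sigma> x y) = 1"
  and twist_mul_left: "x \<in> G \<Longrightarrow> y \<in> G \<Longrightarrow> z \<in> G \<Longrightarrow> \<sigma> (mul x y) z = \<sigma> x z * \<sigma> y z"
  and twist_mul_right: "x \<in> G \<Longrightarrow> y \<in> G \<Longrightarrow> z \<in> G \<Longrightarrow> \<sigma> x (mul y z) = \<sigma> x y * \<sigma> x z"
  and twist_diag [simp]: "x \<in> G \<Longrightarrow> \<sigma> x x = 1"
  using skew unfolding skew_bichar_def by blast+

lemma twist_nonzero: "x \<in> G \<Longrightarrow> y \<in> G \<Longrightarrow> \<sigma> x y \<noteq> 0"
  using twist_norm by force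

lemma twist_e_right [simp]: "x \<in> G \<Longrightarrow> \<sigma> x e = 1"
  using twist_mul_right[of x e e] twist_nonzero[of x e] by simp

lemma twist_e_left [simp]: "x \<in> G \<Longrightarrow> \<sigma> e x = 1"
  using twist_mul_left[of e e x] twist_nonzero[of e x] by simp

lemma twist_iv_right: "x \<in> G \<Longrightarrow> y \<in> G \<Longrightarrow> \<sigma> x (iv y) = cnj (\<sigma> x y)"
proof -
  assume xy: "x \<in> G" "y \<in> G"
  have "\<sigma> x y * \<sigma> x (iv y) = \<sigma> x y * cnj (\<sigma> x y)"
    using xy twist_mul_right[of x y "iv y"] unimodular_mult_cnj[OF twist_norm] by simp
  then show ?thesis using twist_nonzero[OF xy] by simp
qed

lemma twist_iv_left: "x \<in> G \<Longrightarrow> y \<in> G \<Longrightarrow> \<sigma> (iv x) y = cnj (\<sigma> x y)"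
proof -
  assume xy: "x \<in> G" "y \<in> G"
  have "\<sigma> x y * \<sigma> (iv x) y = \<sigma> x y * cnj (\<sigma> x y)"
    using xy twist_mul_left[of x "iv x" y] unimodular_mult_cnj[OF twist_norm] by simp
  then show ?thesis using twist_nonzero[OF xy] by simp
qed

lemma twist_swap: "x \<in> G \<Longrightarrow> y \<in> G \<Longrightarrow> \<sigma> x y = cnj (\<sigma> y x)"
proof -
  assume xy: "x \<in> G" "y \<in> G"
  have "\<sigma> (mul x y) (mul x y) = \<sigma> x x * \<sigma> x y * (\<sigma> y x * \<sigma> y y)"
    using xy by (simp add: twist_mul_left twist_mul_right del: twist_diag)
  then have "\<sigma> y x * \<sigma> x y = \<sigma> y x * cnj (\<sigma> y x)"
    using xy unimodular_mult_cnj[OF twist_norm] by (simp add: mult.commute)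
  then show ?thesis using twist_nonzero[OF xy(2,1)] by simp
qed

lemma twist_mul_iv_right [simp]: "x \<in> G \<Longrightarrow> y \<in> G \<Longrightarrow> \<sigma> y (mul (iv y) x) = \<sigma> y x"
  by (simp add: twist_mul_right twist_iv_right)

lemma twist_mul_self_right [simp]: "x \<in> G \<Longrightarrow> y \<in> G \<Longrightarrow> \<sigma> y (mul y x) = \<sigma> y x"
  by (simp add: twist_mul_right)

abbreviation conv :: "('c \<Rightarrow> complex) \<Rightarrow> ('c \<Rightarrow> complex) \<Rightarrow> 'c \<Rightarrow> complex" where
  "conv \<equiv> twconv G mul iv \<sigma>"

abbreviation cstar_norm :: "('c \<Rightarrow> complex) \<Rightarrow> real" where
  "cstar_norm \<equiv> twisted_cstar_norm G mul iv \<sigma>"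

definition delta :: "'c \<Rightarrow> complex" where
  "delta x = (if x = e then 1 else 0)"

lemma conv_outside: "x \<notin> G \<Longrightarrow> conv f g x = 0"
  by (simp add: twconv_def)

lemma conv_eq_sum:
  assumes "finite A" "A \<subseteq> G" "supp f \<subseteq> A" "x \<in> G"
  shows "conv f g x = (\<Sum>y\<in>A. f y * g (mul (iv y) x) * \<sigma> y x)"
proof -
  have "conv f g x = (\<Sum>y\<in>{y\<in>G. f y \<noteq> 0}. f y * g (mul (iv y) x) * \<sigma> y x)"
    unfolding twconv_def using assms(4) by simp
  also have "\<dots> = (\<Sum>y\<in>A. f y * g (mul (iv y) x) * \<sigma> y x)"
    using assms by (intro sum.mono_neutral_left) (auto simp: supp_def)
  finally show ?thesis .
qed

lemma supp_conv_subset: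
  assumes "fin_supp G f"
  shows "supp (conv f g) \<subseteq> set_mul (supp f) (supp g)"
proof
  fix x assume "x \<in> supp (conv f g)"
  then have nz: "conv f g x \<noteq> 0" and xG: "x \<in> G"
    using conv_outside by (auto simp: supp_def)
  have "conv f g x = (\<Sum>y\<in>supp f. f y * g (mul (iv y) x) * \<sigma> y x)"
    using assms xG by (intro conv_eq_sum) (auto simp: fin_supp_iff)
  then obtain y where y: "y \<in> supp f" and "g (mul (iv y) x) \<noteq> 0"
    using nz sum.not_neutral_contains_not_neutral by force
  then have "mul y (mul (iv y) x) \<in> set_mul (supp f) (supp g)"
    by (simp add: mul_in_set_mul supp_def)
  then show "x \<in> set_mul (supp f) (supp g)"
    using y assms xG by (auto simp: fin_supp_iff)
qed

lemma fin_supp_conv: "fin_supp G f \<Longrightarrow> fin_supp G g \<Longrightarrow> fin_supp G (conv f g)"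
  using supp_conv_subset[of f g] finite_set_mul[of "supp f" "supp g"]
    set_mul_subset[of "supp f" "supp g"]
  by (auto simp: fin_supp_iff intro: finite_subset)

lemma conv_scale_right:
  assumes "fin_supp G f"
  shows "conv f (\<lambda>x. c * g x) = (\<lambda>x. c * conv f g x)"
proof
  fix x
  show "conv f (\<lambda>x. c * g x) x = c * conv f g x"
    using assms by (cases "x \<in> G")
      (auto simp: fin_supp_iff conv_eq_sum[of "supp f"] sum_distrib_left conv_outside mult_ac)
qed

lemma conv_zero_right: "fin_supp G f \<Longrightarrow> conv f (\<lambda>_. 0) = (\<lambda>_. 0)"
  using conv_scale_right[of f 0 "\<lambda>_. 0"] by simp

lemma fin_supp_delta: "fin_supp G delta"
  by (auto simp: fin_supp_iff supp_def delta_def)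

lemma l2norm_delta: "l2norm delta = 1"
  by (simp add: l2norm_eq_sum[of "{e}"] supp_def delta_def)

lemma conv_delta_left:
  assumes "fin_supp G g"
  shows "conv delta g = g"
proof
  fix x
  show "conv delta g x = g x"
    using assms
    by (cases "x \<in> G") (auto simp: conv_eq_sum[of "{e}"] supp_def delta_def conv_outside fin_supp_iff)
qed

lemma conv_conv_right_eq_double_sum:
  assumes f: "fin_supp G f" and g: "fin_supp G g" and x: "x \<in> G"
  shows "conv f (conv g h) x
    = (\<Sum>y\<in>supp f. \<Sum>z\<in>supp g. f y * g z * \<sigma> y z * h (mul (iv (mul y z)) x) * \<sigma> (mul y z) x)"
proof -
  have Sf: "finite (supp f)" "supp f \<subseteq> G" and Sg: "finite (supp g)" "supp g \<subseteq> G"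
    using f g by (auto simp: fin_supp_iff)
  have "conv f (conv g h) x = (\<Sum>y\<in>supp f. f y * conv g h (mul (iv y) x) * \<sigma> y x)"
    using Sf x by (intro conv_eq_sum) auto
  also have "\<dots> = (\<Sum>y\<in>supp f. \<Sum>z\<in>supp g. f y * g z * h (mul (iv z) (mul (iv y) x))
      * \<sigma> z (mul (iv y) x) * \<sigma> y x)"
    using Sf Sg x by (intro sum.cong refl)
      (auto simp: conv_eq_sum[of "supp g"] sum_distrib_left sum_distrib_right mult_ac)
  also have "\<dots> = (\<Sum>y\<in>supp f. \<Sum>z\<in>supp g. f y * g z * \<sigma> y z * h (mul (iv (mul y z)) x)
      * \<sigma> (mul y z) x)"
  proof (intro sum.cong refl)
    fix y z assume "y \<in> supp f" "z \<in> supp g"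
    then have yz: "y \<in> G" "z \<in> G" using Sf Sg by auto
    have "mul (iv z) (mul (iv y) x) = mul (iv (mul y z)) x"
      using yz x by (simp add: iv_mul_distrib mul_assoc mul_left_commute)
    moreover have "\<sigma> z (mul (iv y) x) * \<sigma> y x = \<sigma> y z * \<sigma> (mul y z) x"
      using yz x by (simp add: twist_mul_right twist_mul_left twist_iv_right twist_swap[of y z])
    ultimately show "f y * g z * h (mul (iv z) (mul (iv y) x)) * \<sigma> z (mul (iv y) x) * \<sigma> y x
        = f y * g z * \<sigma> y z * h (mul (iv (mul y z)) x) * \<sigma> (mul y z) x"
      by (simp only: mult.assoc) (simp only: ac_simps)
  qed
  finally show ?thesis .
qed

lemma conv_conv_left_eq_double_sum:
  assumes f: "fin_supp G f" and g: "fin_supp G g" and x: "x \<in> G"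
  shows "conv (conv f g) h x
    = (\<Sum>y\<in>supp f. \<Sum>z\<in>supp g. f y * g z * \<sigma> y z * h (mul (iv (mul y z)) x) * \<sigma> (mul y z) x)"
proof -
  define W where "W = set_mul (supp f) (supp g)"
  have Sf: "finite (supp f)" "supp f \<subseteq> G" and Sg: "finite (supp g)" "supp g \<subseteq> G"
    using f g by (auto simp: fin_supp_iff)
  have W: "finite W" "W \<subseteq> G"
    using Sf Sg by (auto simp: W_def finite_set_mul set_mul_subset)
  have "conv (conv f g) h x = (\<Sum>w\<in>W. conv f g w * h (mul (iv w) x) * \<sigma> w x)"
    using W x supp_conv_subset[OF f] by (intro conv_eq_sum) (auto simp: W_def)
  also have "\<dots> = (\<Sum>y\<in>supp f. \<Sum>w\<in>W. f y * g (mul (iv y) w) * \<sigma> y w * h (mul (iv w) x) * \<sigma> w x)"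
    using W Sf by (subst sum.swap)
      (auto intro!: sum.cong simp: conv_eq_sum[of "supp f"] sum_distrib_right)
  also have "\<dots> = (\<Sum>y\<in>supp f. \<Sum>z\<in>supp g. f y * g z * \<sigma> y z * h (mul (iv (mul y z)) x)
      * \<sigma> (mul y z) x)"
  proof (rule sum.cong[OF refl])
    fix y assume "y \<in> supp f"
    then have y: "y \<in> G" "y \<in> supp f" using Sf by auto
    define F where "F = (\<lambda>w. f y * g (mul (iv y) w) * \<sigma> y w * h (mul (iv w) x) * \<sigma> w x)"
    have "sum F W = (\<Sum>z\<in>supp g. F (mul y z))"
    proof (rule sum_reindex_bij_betw_vanishing[OF bij_betw_mul_left[OF y(1)] W Sg])
      fix w assume w: "w \<in> G" "w \<notin> W"
      have "mul (iv y) w \<notin> supp g"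
      proof
        assume "mul (iv y) w \<in> supp g"
        then have "mul y (mul (iv y) w) \<in> W"
          unfolding W_def by (rule mul_in_set_mul[OF y(2)])
        then show False using w y by simp
      qed
      then show "F w = 0" by (simp add: F_def supp_def)
    next
      fix z assume "z \<in> G" "z \<notin> supp g"
      then show "F (mul y z) = 0" using y by (simp add: F_def supp_def)
    qed
    also have "\<dots> = (\<Sum>z\<in>supp g. f y * g z * \<sigma> y z * h (mul (iv (mul y z)) x) * \<sigma> (mul y z) x)"
      using y Sg by (intro sum.cong) (auto simp: F_def)
    finally show "(\<Sum>w\<in>W. f y * g (mul (iv y) w) * \<sigma> y w * h (mul (iv w) x) * \<sigma> w x)
        = (\<Sum>z\<in>supp g. f y * g z * \<sigma> y z * h (mul (iv (mul y z)) x) * \<sigma> (mul y z) x)"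
      by (simp only: F_def)
  qed
  finally show ?thesis .
qed

lemma conv_assoc:
  assumes "fin_supp G f" "fin_supp G g"
  shows "conv f (conv g h) = conv (conv f g) h"
proof
  fix x
  show "conv f (conv g h) x = conv (conv f g) h x"
    using assms by (cases "x \<in> G")
      (simp_all add: conv_outside conv_conv_right_eq_double_sum conv_conv_left_eq_double_sum)
qed

end

section \<open>The twisted \<open>C\<^sup>*\<close>-norm\<close>

context twisted_abelian_group
begin

definition self_adjoint :: "('c \<Rightarrow> complex) \<Rightarrow> bool" where
  "self_adjoint f \<longleftrightarrow> (\<forall>y\<in>G. f (iv y) = cnj (f y))"

lemma self_adjoint_iff_twstar: "self_adjoint f \<longleftrightarrow> (\<forall>y\<in>G. f y = twstar iv \<sigma> f y)"
proof -
  have twstar: "twstar iv \<sigma> f y = cnj (f (iv y))" if "y \<in> G" for y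
    using that by (simp add: twstar_def twist_iv_right)
  show ?thesis
  proof
    assume "self_adjoint f"
    then show "\<forall>y\<in>G. f y = twstar iv \<sigma> f y"
      by (simp add: self_adjoint_def twstar)
  next
    assume fix_twstar: "\<forall>y\<in>G. f y = twstar iv \<sigma> f y"
    have "f (iv y) = cnj (f y)" if "y \<in> G" for y
    proof -
      have "f (iv y) = twstar iv \<sigma> f (iv y)"
        using fix_twstar iv_in[OF that] by blast
      then show ?thesis using that by (simp add: twstar)
    qed
    then show "self_adjoint f" by (simp add: self_adjoint_def)
  qed
qed

lemma l2_inner_conv_left_eq_double_sum:
  assumes f: "fin_supp G f" and \<xi>: "fin_supp G \<xi>" and \<eta>: "fin_supp G \<eta>"
  shows "l2_inner (conv f \<xi>) \<eta> = (\<Sum>y\<in>supp f. \<Sum>u\<in>supp \<xi>. f y * \<xi> u * \<sigma> y u * cnj (\<eta> (mul y u)))"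
proof -
  have Sf: "finite (supp f)" "supp f \<subseteq> G" and S\<xi>: "finite (supp \<xi>)" "supp \<xi> \<subseteq> G"
    and S\<eta>: "finite (supp \<eta>)" "supp \<eta> \<subseteq> G"
    using f \<xi> \<eta> by (auto simp: fin_supp_iff)
  have "l2_inner (conv f \<xi>) \<eta> = (\<Sum>x\<in>supp \<eta>. conv f \<xi> x * cnj (\<eta> x))"
    using fin_supp_conv[OF f \<xi>] S\<eta> by (intro l2_inner_eq_sum) (auto simp: fin_supp_iff)
  also have "\<dots> = (\<Sum>y\<in>supp f. \<Sum>x\<in>supp \<eta>. f y * \<xi> (mul (iv y) x) * \<sigma> y x * cnj (\<eta> x))"
    using Sf S\<eta> by (subst sum.swap)
      (auto intro!: sum.cong simp: conv_eq_sum[of "supp f"] sum_distrib_right)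
  also have "\<dots> = (\<Sum>y\<in>supp f. \<Sum>u\<in>supp \<xi>. f y * \<xi> u * \<sigma> y u * cnj (\<eta> (mul y u)))"
  proof (rule sum.cong[OF refl])
    fix y assume "y \<in> supp f"
    then have y: "y \<in> G" using Sf by auto
    define F where "F = (\<lambda>x. f y * \<xi> (mul (iv y) x) * \<sigma> y x * cnj (\<eta> x))"
    have "sum F (supp \<eta>) = (\<Sum>u\<in>supp \<xi>. F (mul y u))"
      by (rule sum_reindex_bij_betw_vanishing[OF bij_betw_mul_left[OF y] S\<eta> S\<xi>])
        (use y in \<open>auto simp: F_def supp_def\<close>)
    also have "\<dots> = (\<Sum>u\<in>supp \<xi>. f y * \<xi> u * \<sigma> y u * cnj (\<eta> (mul y u)))"
      using y S\<xi> by (intro sum.cong) (auto simp: F_def)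
    finally show "(\<Sum>x\<in>supp \<eta>. f y * \<xi> (mul (iv y) x) * \<sigma> y x * cnj (\<eta> x))
        = (\<Sum>u\<in>supp \<xi>. f y * \<xi> u * \<sigma> y u * cnj (\<eta> (mul y u)))"
      by (simp only: F_def)
  qed
  finally show ?thesis .
qed

lemma l2_inner_conv_right_eq_double_sum:
  assumes f: "fin_supp G f" and sa: "self_adjoint f" and \<xi>: "fin_supp G \<xi>" and \<eta>: "fin_supp G \<eta>"
  shows "l2_inner \<xi> (conv f \<eta>) = (\<Sum>y\<in>supp f. \<Sum>u\<in>supp \<xi>. f y * \<xi> u * \<sigma> y u * cnj (\<eta> (mul y u)))"
proof -
  have Sf: "finite (supp f)" "supp f \<subseteq> G" and S\<xi>: "finite (supp \<xi>)" "supp \<xi> \<subseteq> G"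
    using f \<xi> by (auto simp: fin_supp_iff)
  have f_iv: "f (iv y) = cnj (f y)" if "y \<in> G" for y
    using sa that by (simp add: self_adjoint_def)
  have "l2_inner \<xi> (conv f \<eta>) = (\<Sum>u\<in>supp \<xi>. \<Sum>y\<in>supp f. \<xi> u * cnj (f y * \<eta> (mul (iv y) u) * \<sigma> y u))"
    unfolding l2_inner_def using Sf S\<xi>
    by (auto intro!: sum.cong simp: conv_eq_sum[of "supp f"] sum_distrib_left)
  also have "\<dots> = (\<Sum>u\<in>supp \<xi>. \<Sum>y\<in>supp f. f y * \<xi> u * \<sigma> y u * cnj (\<eta> (mul y u)))"
  proof (rule sum.cong[OF refl])
    fix u assume "u \<in> supp \<xi>"
    then have u: "u \<in> G" using S\<xi> by auto
    define F where "F = (\<lambda>y. \<xi> u * cnj (f y * \<eta> (mul (iv y) u) * \<sigma> y u))"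
    have "sum F (supp f) = (\<Sum>y\<in>supp f. F (iv y))"
      by (rule sum_reindex_bij_betw_vanishing[OF bij_betw_iv Sf Sf])
        (auto simp: F_def supp_def f_iv)
    also have "\<dots> = (\<Sum>y\<in>supp f. f y * \<xi> u * \<sigma> y u * cnj (\<eta> (mul y u)))"
      using u Sf by (intro sum.cong) (auto simp: F_def f_iv twist_iv_left)
    finally show "(\<Sum>y\<in>supp f. \<xi> u * cnj (f y * \<eta> (mul (iv y) u) * \<sigma> y u))
        = (\<Sum>y\<in>supp f. f y * \<xi> u * \<sigma> y u * cnj (\<eta> (mul y u)))"
      by (simp only: F_def)
  qed
  also have "\<dots> = (\<Sum>y\<in>supp f. \<Sum>u\<in>supp \<xi>. f y * \<xi> u * \<sigma> y u * cnj (\<eta> (mul y u)))"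
    by (rule sum.swap)
  finally show ?thesis .
qed

lemma l2_inner_conv_self_adjoint:
  "fin_supp G f \<Longrightarrow> self_adjoint f \<Longrightarrow> fin_supp G \<xi> \<Longrightarrow> fin_supp G \<eta>
    \<Longrightarrow> l2_inner (conv f \<xi>) \<eta> = l2_inner \<xi> (conv f \<eta>)"
  by (simp add: l2_inner_conv_left_eq_double_sum l2_inner_conv_right_eq_double_sum)

lemma L2_set_translate_le:
  assumes \<xi>: "fin_supp G \<xi>" and y: "y \<in> G" and A: "finite A" "A \<subseteq> G"
  shows "L2_set (\<lambda>x. cmod (\<xi> (mul (iv y) x))) A \<le> l2norm \<xi>"
proof -
  let ?B = "mul (iv y) ` A"
  have "inj_on (mul (iv y)) A"
    using bij_betw_mul_left[of "iv y"] y A by (auto simp: bij_betw_def intro: inj_on_subset)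
  then have "L2_set (\<lambda>x. cmod (\<xi> (mul (iv y) x))) A = sqrt (\<Sum>u\<in>?B. (cmod (\<xi> u))\<^sup>2)"
    unfolding L2_set_def by (simp add: sum.reindex)
  also have "\<dots> \<le> sqrt (\<Sum>u\<in>?B \<union> supp \<xi>. (cmod (\<xi> u))\<^sup>2)"
    using \<xi> A by (auto intro!: sum_mono2 simp: fin_supp_iff)
  also have "\<dots> = l2norm \<xi>"
    using \<xi> A by (simp add: l2norm_eq_sum[of "?B \<union> supp \<xi>"] fin_supp_iff)
  finally show ?thesis .
qed

lemma l2norm_conv_le_l1_norm:
  assumes f: "fin_supp G f" and \<xi>: "fin_supp G \<xi>"
  shows "l2norm (conv f \<xi>) \<le> l1_norm f * l2norm \<xi>"
proof -
  define A where "A = set_mul (supp f) (supp \<xi>)"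
  have Sf: "finite (supp f)" "supp f \<subseteq> G"
    using f by (auto simp: fin_supp_iff)
  have A: "finite A" "A \<subseteq> G"
    using f \<xi> by (auto simp: A_def fin_supp_iff finite_set_mul set_mul_subset)
  have "l2norm (conv f \<xi>) = L2_set (\<lambda>x. cmod (conv f \<xi> x)) A"
    using supp_conv_subset[OF f] A by (intro l2norm_eq_L2_set) (auto simp: A_def)
  also have "\<dots> \<le> L2_set (\<lambda>x. \<Sum>y\<in>supp f. cmod (f y) * cmod (\<xi> (mul (iv y) x))) A"
  proof (rule L2_set_mono)
    fix x assume "x \<in> A"
    then have x: "x \<in> G" using A by auto
    have "conv f \<xi> x = (\<Sum>y\<in>supp f. f y * \<xi> (mul (iv y) x) * \<sigma> y x)"
      using x Sf by (intro conv_eq_sum) auto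
    also have "cmod \<dots> \<le> (\<Sum>y\<in>supp f. cmod (f y * \<xi> (mul (iv y) x) * \<sigma> y x))"
      by (rule norm_sum)
    also have "\<dots> = (\<Sum>y\<in>supp f. cmod (f y) * cmod (\<xi> (mul (iv y) x)))"
      using x Sf by (intro sum.cong refl) (simp add: norm_mult twist_norm subset_iff)
    finally show "cmod (conv f \<xi> x) \<le> (\<Sum>y\<in>supp f. cmod (f y) * cmod (\<xi> (mul (iv y) x)))" .
  qed simp
  also have "\<dots> \<le> (\<Sum>y\<in>supp f. cmod (f y) * L2_set (\<lambda>x. cmod (\<xi> (mul (iv y) x))) A)"
    using L2_set_sum_le by (simp add: L2_set_right_distrib)
  also have "\<dots> \<le> (\<Sum>y\<in>supp f. cmod (f y) * l2norm \<xi>)"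
    using Sf by (intro sum_mono mult_left_mono L2_set_translate_le[OF \<xi> _ A]) auto
  also have "\<dots> = l1_norm f * l2norm \<xi>"
    by (simp add: l1_norm_def sum_distrib_right)
  finally show ?thesis .
qed

lemma bdd_above_conv_unit_ball:
  assumes "fin_supp G f"
  shows "bdd_above ((\<lambda>\<xi>. l2norm (conv f \<xi>)) ` {\<xi>. fin_supp G \<xi> \<and> l2norm \<xi> \<le> 1})"
proof (rule bdd_aboveI2)
  fix \<xi> assume "\<xi> \<in> {\<xi>. fin_supp G \<xi> \<and> l2norm \<xi> \<le> 1}"
  then have "l2norm (conv f \<xi>) \<le> l1_norm f * l2norm \<xi>" "l2norm \<xi> \<le> 1"
    using l2norm_conv_le_l1_norm[OF assms] by auto
  then show "l2norm (conv f \<xi>) \<le> l1_norm f"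
    using mult_left_le[OF _ l1_norm_nonneg, of "l2norm \<xi>" f] by linarith
qed

lemma fin_supp_zero: "fin_supp G (\<lambda>_. 0)"
  by (simp add: fin_supp_iff supp_def)

lemma l2norm_conv_le_cstar_norm:
  "fin_supp G f \<Longrightarrow> fin_supp G \<xi> \<Longrightarrow> l2norm \<xi> \<le> 1 \<Longrightarrow> l2norm (conv f \<xi>) \<le> cstar_norm f"
  unfolding twisted_cstar_norm_def by (rule cSUP_upper) (auto intro: bdd_above_conv_unit_ball)

lemma cstar_norm_le:
  "(\<And>\<xi>. fin_supp G \<xi> \<Longrightarrow> l2norm \<xi> \<le> 1 \<Longrightarrow> l2norm (conv f \<xi>) \<le> M) \<Longrightarrow> cstar_norm f \<le> M"
  unfolding twisted_cstar_norm_def by (rule cSUP_least) (use fin_supp_zero in auto)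

lemma cstar_norm_nonneg:
  assumes "fin_supp G f"
  shows "0 \<le> cstar_norm f"
  using l2norm_conv_le_cstar_norm[OF assms fin_supp_zero] l2norm_nonneg[of "conv f (\<lambda>_. 0)"]
  by simp

lemma l2norm_conv_le_cstar_norm_mult:
  assumes f: "fin_supp G f" and \<xi>: "fin_supp G \<xi>"
  shows "l2norm (conv f \<xi>) \<le> cstar_norm f * l2norm \<xi>"
proof (cases "l2norm \<xi> = 0")
  case True
  then have "\<xi> = (\<lambda>_. 0)" using l2norm_eq_0D \<xi> by (auto simp: fin_supp_iff)
  then show ?thesis using conv_zero_right[OF f] by simp
next
  case False
  then have pos: "0 < l2norm \<xi>" using l2norm_nonneg[of \<xi>] by simp
  define c where "c = complex_of_real (1 / l2norm \<xi>)"
  have c: "cmod c = 1 / l2norm \<xi>" "c \<noteq> 0" using pos by (auto simp: c_def norm_divide)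
  have "fin_supp G (\<lambda>x. c * \<xi> x)" using \<xi> c by (simp add: fin_supp_iff supp_def)
  moreover have "l2norm (\<lambda>x. c * \<xi> x) = 1"
    using \<xi> c pos by (simp add: l2norm_scale fin_supp_iff)
  ultimately have "l2norm (conv f (\<lambda>x. c * \<xi> x)) \<le> cstar_norm f"
    by (intro l2norm_conv_le_cstar_norm[OF f]) auto
  moreover have "l2norm (conv f (\<lambda>x. c * \<xi> x)) = l2norm (conv f \<xi>) / l2norm \<xi>"
    using fin_supp_conv[OF f \<xi>] c by (simp add: conv_scale_right[OF f] l2norm_scale fin_supp_iff)
  ultimately show ?thesis using pos by (simp add: divide_le_eq mult.commute)
qed

lemma fin_supp_conv_iter: "fin_supp G f \<Longrightarrow> fin_supp G \<xi> \<Longrightarrow> fin_supp G ((conv f ^^ m) \<xi>)"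
  by (induction m) (simp_all add: fin_supp_conv)

lemma l2norm_conv_iter_le:
  assumes f: "fin_supp G f" and \<xi>: "fin_supp G \<xi>"
  shows "l2norm ((conv f ^^ m) \<xi>) \<le> cstar_norm f ^ m * l2norm \<xi>"
proof (induction m)
  case (Suc m)
  have "l2norm ((conv f ^^ Suc m) \<xi>) \<le> cstar_norm f * l2norm ((conv f ^^ m) \<xi>)"
    using l2norm_conv_le_cstar_norm_mult[OF f fin_supp_conv_iter[OF f \<xi>]] by simp
  also have "\<dots> \<le> cstar_norm f ^ Suc m * l2norm \<xi>"
    using mult_left_mono[OF Suc.IH cstar_norm_nonneg[OF f]] by (simp add: mult.assoc)
  finally show ?case .
qed simp

definition conv_pow :: "('c \<Rightarrow> complex) \<Rightarrow> nat \<Rightarrow> 'c \<Rightarrow> complex" where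
  "conv_pow f m = (conv f ^^ m) delta"

lemma conv_pow_0: "conv_pow f 0 = delta"
  and conv_pow_Suc: "conv_pow f (Suc m) = conv f (conv_pow f m)"
  by (simp_all add: conv_pow_def)

lemma fin_supp_conv_pow: "fin_supp G f \<Longrightarrow> fin_supp G (conv_pow f m)"
  by (simp add: conv_pow_def fin_supp_conv_iter fin_supp_delta)

lemma conv_conv_pow:
  assumes f: "fin_supp G f" and \<xi>: "fin_supp G \<xi>"
  shows "conv (conv_pow f m) \<xi> = (conv f ^^ m) \<xi>"
  by (induction m) (simp_all add: conv_pow_0 conv_pow_Suc conv_delta_left[OF \<xi>]
      conv_assoc[OF f fin_supp_conv_pow[OF f], symmetric])

lemma supp_conv_pow_subset:
  assumes "fin_supp G f"
  shows "supp (conv_pow f m) \<subseteq> products (supp f) m"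
proof (induction m)
  case 0
  then show ?case by (auto simp: conv_pow_0 delta_def supp_def)
next
  case (Suc m)
  have "supp (conv_pow f (Suc m)) \<subseteq> set_mul (supp f) (supp (conv_pow f m))"
    unfolding conv_pow_Suc by (rule supp_conv_subset[OF assms])
  also have "\<dots> \<subseteq> products (supp f) (Suc m)"
    using Suc.IH by (auto simp: set_mul_def)
  finally show ?case .
qed

lemma l2norm_conv_pow_le: "fin_supp G f \<Longrightarrow> l2norm (conv_pow f m) \<le> cstar_norm f ^ m"
  using l2norm_conv_iter_le[OF _ fin_supp_delta, of f m] by (simp add: conv_pow_def l2norm_delta)

lemma l1_norm_conv_pow_le:
  assumes f: "fin_supp G f"
  shows "l1_norm (conv_pow f m) \<le> sqrt ((real m + 1) ^ card (supp f)) * cstar_norm f ^ m"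
proof -
  let ?P = "products (supp f) m"
  have P: "finite ?P" "card ?P \<le> (m + 1) ^ card (supp f)"
    using f card_products_le[of "supp f" m] by (auto simp: fin_supp_iff finite_products)
  have "l1_norm (conv_pow f m) \<le> sqrt (card ?P) * l2norm (conv_pow f m)"
    by (rule l1_norm_le_sqrt_card_l2norm[OF P(1) supp_conv_pow_subset[OF f]])
  also have "\<dots> \<le> sqrt ((real m + 1) ^ card (supp f)) * cstar_norm f ^ m"
  proof (rule mult_mono)
    have "real (card ?P) \<le> (real m + 1) ^ card (supp f)"
      using P(2) by (metis of_nat_1 of_nat_add of_nat_le_iff of_nat_power)
    then show "sqrt (card ?P) \<le> sqrt ((real m + 1) ^ card (supp f))" by simp
  qed (simp_all add: l2norm_conv_pow_le[OF f] l2norm_nonneg)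
  finally show ?thesis .
qed

lemma l2norm_conv_iter_le_l1_norm:
  assumes "fin_supp G f" "fin_supp G \<xi>"
  shows "l2norm ((conv f ^^ m) \<xi>) \<le> l1_norm (conv_pow f m) * l2norm \<xi>"
  using l2norm_conv_le_l1_norm[OF fin_supp_conv_pow[OF assms(1)] assms(2)]
  by (simp add: conv_conv_pow[OF assms])

lemma l2_inner_conv_iter_self_adjoint:
  assumes f: "fin_supp G f" and sa: "self_adjoint f" and \<xi>: "fin_supp G \<xi>" and \<eta>: "fin_supp G \<eta>"
  shows "l2_inner ((conv f ^^ i) \<xi>) ((conv f ^^ k) \<eta>) = l2_inner ((conv f ^^ (i + k)) \<xi>) \<eta>"
proof (induction k arbitrary: i)
  case (Suc k)
  have "l2_inner ((conv f ^^ i) \<xi>) ((conv f ^^ Suc k) \<eta>)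
      = l2_inner ((conv f ^^ Suc i) \<xi>) ((conv f ^^ k) \<eta>)"
    using l2_inner_conv_self_adjoint[OF f sa fin_supp_conv_iter[OF f \<xi>] fin_supp_conv_iter[OF f \<eta>]]
    by simp
  then show ?case using Suc.IH[of "Suc i"] by simp
qed simp

lemma l2norm_conv_iter_squared_le:
  assumes f: "fin_supp G f" and sa: "self_adjoint f" and \<xi>: "fin_supp G \<xi>"
  shows "(l2norm ((conv f ^^ m) \<xi>))\<^sup>2 \<le> l2norm ((conv f ^^ (m + m)) \<xi>) * l2norm \<xi>"
proof -
  have "of_real ((l2norm ((conv f ^^ m) \<xi>))\<^sup>2) = l2_inner ((conv f ^^ (m + m)) \<xi>) \<xi>"
    using l2_inner_conv_iter_self_adjoint[OF f sa \<xi> \<xi>, of m m] fin_supp_conv_iter[OF f \<xi>, of m]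
    by (simp add: l2_inner_self fin_supp_iff)
  then have "(l2norm ((conv f ^^ m) \<xi>))\<^sup>2 = cmod (l2_inner ((conv f ^^ (m + m)) \<xi>) \<xi>)"
    by (metis abs_power2 norm_of_real)
  also have "\<dots> \<le> l2norm ((conv f ^^ (m + m)) \<xi>) * l2norm \<xi>"
    using fin_supp_conv_iter[OF f \<xi>] \<xi> by (intro l2_inner_Cauchy_Schwarz) (auto simp: fin_supp_iff)
  finally show ?thesis .
qed

text \<open>Iterated \<open>C*\<close>-identity: \<open>\<Parallel>f \<xi>\<Parallel>\<^sup>2 \<le> \<Parallel>f\<^sup>2 \<xi>\<Parallel> \<Parallel>\<xi>\<Parallel>\<close> for self-adjoint \<open>f\<close>.\<close>

lemma l2norm_conv_pow2_le:
  assumes f: "fin_supp G f" and sa: "self_adjoint f"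
    and bound: "\<And>\<zeta>. fin_supp G \<zeta> \<Longrightarrow> l2norm \<zeta> \<le> 1 \<Longrightarrow> l2norm ((conv f ^^ 2 ^ j) \<zeta>) \<le> L"
    and \<xi>: "fin_supp G \<xi>" "l2norm \<xi> \<le> 1"
  shows "l2norm (conv f \<xi>) ^ 2 ^ j \<le> L"
  using bound \<xi>
proof (induction j arbitrary: L)
  case 0
  then show ?case by simp
next
  case (Suc j)
  have L: "0 \<le> L"
    using Suc.prems(1)[OF fin_supp_zero] l2norm_nonneg[of "(conv f ^^ 2 ^ Suc j) (\<lambda>_. 0)"] by simp
  have "l2norm ((conv f ^^ 2 ^ j) \<zeta>) \<le> sqrt L" if \<zeta>: "fin_supp G \<zeta>" "l2norm \<zeta> \<le> 1" for \<zeta>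
  proof -
    have "(l2norm ((conv f ^^ 2 ^ j) \<zeta>))\<^sup>2 \<le> l2norm ((conv f ^^ (2 ^ j + 2 ^ j)) \<zeta>) * l2norm \<zeta>"
      by (rule l2norm_conv_iter_squared_le[OF f sa \<zeta>(1)])
    also have "\<dots> \<le> L * 1"
      using Suc.prems(1)[OF \<zeta>] \<zeta>(2) L by (intro mult_mono) (auto simp: mult_2 l2norm_nonneg)
    finally show ?thesis by (simp add: real_le_rsqrt)
  qed
  then have "l2norm (conv f \<xi>) ^ 2 ^ j \<le> sqrt L"
    using Suc.IH Suc.prems(2,3) by blast
  then have "(l2norm (conv f \<xi>) ^ 2 ^ j)\<^sup>2 \<le> (sqrt L)\<^sup>2"
    by (rule power_mono[OF _ zero_le_power[OF l2norm_nonneg]])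
  then show ?case using L by (simp add: power_mult[symmetric] mult.commute)
qed

lemma cstar_norm_pow2_le_l1_norm:
  assumes f: "fin_supp G f" and sa: "self_adjoint f"
  shows "cstar_norm f ^ 2 ^ j \<le> l1_norm (conv_pow f (2 ^ j))"
proof -
  let ?m = "2 ^ j :: nat" and ?L = "l1_norm (conv_pow f (2 ^ j))"
  have m: "0 < ?m" by simp
  have "cstar_norm f \<le> root ?m ?L"
  proof (rule cstar_norm_le)
    fix \<xi> assume \<xi>: "fin_supp G \<xi>" "l2norm \<xi> \<le> 1"
    have "l2norm ((conv f ^^ ?m) \<zeta>) \<le> ?L" if "fin_supp G \<zeta>" "l2norm \<zeta> \<le> 1" for \<zeta>
      using l2norm_conv_iter_le_l1_norm[OF f that(1), of ?m]
        mult_left_le[OF that(2) l1_norm_nonneg, of "conv_pow f ?m"] by linarith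
    then have "l2norm (conv f \<xi>) ^ ?m \<le> ?L"
      by (rule l2norm_conv_pow2_le[OF f sa _ \<xi>])
    then have "root ?m (l2norm (conv f \<xi>) ^ ?m) \<le> root ?m ?L"
      by (rule real_root_le_mono[OF m])
    then show "l2norm (conv f \<xi>) \<le> root ?m ?L"
      by (simp only: real_root_power_cancel[OF m l2norm_nonneg])
  qed
  then have "cstar_norm f ^ ?m \<le> root ?m ?L ^ ?m"
    using cstar_norm_nonneg[OF f] by (intro power_mono) auto
  also have "\<dots> = ?L" by (rule real_root_pow_pos2[OF m l1_norm_nonneg])
  finally show ?thesis .
qed

end

section \<open>Pushforward along homomorphisms\<close>

definition pushforward :: "'c set \<Rightarrow> 'd set \<Rightarrow> ('c \<Rightarrow> 'd) \<Rightarrow> ('c \<Rightarrow> complex) \<Rightarrow> 'd \<Rightarrow> complex" where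
  "pushforward G G' q h x' = (if x' \<in> G' then (\<Sum>x\<in>{x\<in>G. q x = x' \<and> h x \<noteq> 0}. h x) else 0)"

locale twisted_hom = abelian_group_on G mul iv e + target: twisted_abelian_group G' mul' iv' e' \<sigma>'
  for G :: "'c set" and mul iv e and G' :: "'d set" and mul' iv' e' \<sigma>' +
  fixes q :: "'c \<Rightarrow> 'd"
  assumes hom_closed: "x \<in> G \<Longrightarrow> q x \<in> G'"
    and hom_mul: "x \<in> G \<Longrightarrow> y \<in> G \<Longrightarrow> q (mul x y) = mul' (q x) (q y)"
begin

lemma hom_e: "q e = e'"
proof -
  have "q e = mul' (iv' (q e)) (mul' (q e) (q e))"
    using hom_closed[of e] by simp
  also have "\<dots> = e'"
    using hom_mul[of e e] hom_closed[of e] by simp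
  finally show ?thesis .
qed

lemma hom_iv: "x \<in> G \<Longrightarrow> q (iv x) = iv' (q x)"
  using hom_mul[of "iv x" x] hom_closed by (intro target.iv_unique) (simp_all add: hom_e)

lemma twisted_abelian_group_pullback: "twisted_abelian_group G mul iv e (\<lambda>x y. \<sigma>' (q x) (q y))"
  by unfold_locales (simp add: skew_bichar_def hom_closed hom_mul target.twist_norm
      target.twist_mul_left target.twist_mul_right)

sublocale twisted_abelian_group G mul iv e "\<lambda>x y. \<sigma>' (q x) (q y)"
  by (rule twisted_abelian_group_pullback)

abbreviation push :: "('c \<Rightarrow> complex) \<Rightarrow> 'd \<Rightarrow> complex" where
  "push \<equiv> pushforward G G' q"

lemma pushforward_outside: "x' \<notin> G' \<Longrightarrow> push h x' = 0"
  by (simp add: pushforward_def)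

lemma pushforward_eq_fiber_sum:
  assumes "fin_supp G h" "x' \<in> G'"
  shows "push h x' = (\<Sum>x\<in>{x\<in>supp h. q x = x'}. h x)"
proof -
  have "{x\<in>G. q x = x' \<and> h x \<noteq> 0} = {x\<in>supp h. q x = x'}"
    using assms by (auto simp: fin_supp_iff supp_def)
  then show ?thesis using assms by (simp add: pushforward_def)
qed

lemma pushforward_eq_sum:
  assumes "fin_supp G h" "x' \<in> G'" "finite A" "supp h \<subseteq> A"
  shows "push h x' = (\<Sum>x\<in>A. if q x = x' then h x else 0)"
proof -
  have "push h x' = (\<Sum>x\<in>supp h. if q x = x' then h x else 0)"
    using assms by (simp add: pushforward_eq_fiber_sum sum.inter_filter fin_supp_iff)
  also have "\<dots> = (\<Sum>x\<in>A. if q x = x' then h x else 0)"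
    using assms by (intro sum.mono_neutral_left) (auto simp: supp_def)
  finally show ?thesis .
qed

lemma supp_pushforward_subset:
  assumes "fin_supp G h"
  shows "supp (push h) \<subseteq> q ` supp h"
proof
  fix x' assume "x' \<in> supp (push h)"
  then have "push h x' \<noteq> 0" "x' \<in> G'"
    using pushforward_outside by (auto simp: supp_def)
  then have "{x\<in>supp h. q x = x'} \<noteq> {}"
    using pushforward_eq_fiber_sum[OF assms] by fastforce
  then show "x' \<in> q ` supp h" by blast
qed

lemma fin_supp_pushforward:
  assumes "fin_supp G h"
  shows "fin_supp G' (push h)"
proof -
  have "finite (q ` supp h)" "q ` supp h \<subseteq> G'"
    using assms hom_closed by (auto simp: fin_supp_iff)
  then show ?thesis
    using supp_pushforward_subset[OF assms] by (auto simp: fin_supp_iff intro: finite_subset)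
qed

lemma pushforward_apply_inj:
  assumes h: "fin_supp G h" and inj: "inj_on q (supp h)" and x: "x \<in> supp h"
  shows "push h (q x) = h x"
proof -
  have "{z\<in>supp h. q z = q x} = {x}"
    using inj x by (auto dest: inj_onD)
  then show ?thesis
    using x h hom_closed by (simp add: pushforward_eq_fiber_sum fin_supp_iff subset_iff)
qed

lemma l2norm_pushforward_inj:
  assumes h: "fin_supp G h" and inj: "inj_on q (supp h)"
  shows "l2norm (push h) = l2norm h"
proof -
  have fin: "finite (supp h)" using h by (simp add: fin_supp_iff)
  have "l2norm (push h) = sqrt (\<Sum>x'\<in>q ` supp h. (cmod (push h x'))\<^sup>2)"
    using supp_pushforward_subset[OF h] fin by (intro l2norm_eq_sum) auto
  also have "\<dots> = sqrt (\<Sum>x\<in>supp h. (cmod (h x))\<^sup>2)"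
    using inj by (simp add: sum.reindex pushforward_apply_inj[OF h inj])
  also have "\<dots> = l2norm h"
    using fin by (simp add: l2norm_eq_sum)
  finally show ?thesis .
qed

lemma l1_norm_pushforward_le:
  assumes h: "fin_supp G h"
  shows "l1_norm (push h) \<le> l1_norm h"
proof -
  have fin: "finite (supp h)" "supp h \<subseteq> G" using h by (auto simp: fin_supp_iff)
  have "l1_norm (push h) = (\<Sum>x'\<in>q ` supp h. cmod (push h x'))"
    using fin supp_pushforward_subset[OF h] by (intro l1_norm_eq_sum) auto
  also have "\<dots> \<le> (\<Sum>x'\<in>q ` supp h. \<Sum>x\<in>{x\<in>supp h. q x = x'}. cmod (h x))"
  proof (rule sum_mono)
    fix x' assume "x' \<in> q ` supp h"
    then have "x' \<in> G'" using fin hom_closed by auto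
    then show "cmod (push h x') \<le> (\<Sum>x\<in>{x\<in>supp h. q x = x'}. cmod (h x))"
      by (simp add: pushforward_eq_fiber_sum[OF h] norm_sum)
  qed
  also have "\<dots> = l1_norm h"
    using fin by (simp add: sum.group l1_norm_def)
  finally show ?thesis .
qed

lemma hom_mul_eq_iff:
  assumes "x \<in> G" "z \<in> G" "x' \<in> G'"
  shows "q (mul x z) = x' \<longleftrightarrow> q z = mul' (iv' (q x)) x'"
proof
  assume "q (mul x z) = x'"
  then show "q z = mul' (iv' (q x)) x'"
    using assms hom_closed by (simp add: hom_mul flip: \<open>q (mul x z) = x'\<close>)
next
  assume "q z = mul' (iv' (q x)) x'"
  then show "q (mul x z) = x'"
    using assms hom_closed by (simp add: hom_mul)
qed

lemma conv_pushforward_eq_sum: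
  assumes h1: "fin_supp G h1" and h2: "fin_supp G h2" and x': "x' \<in> G'"
  shows "target.conv (push h1) (push h2) x'
    = (\<Sum>y\<in>supp h1. h1 y * push h2 (mul' (iv' (q y)) x') * \<sigma>' (q y) x')"
proof -
  let ?F = "\<lambda>y'. push h2 (mul' (iv' y') x') * \<sigma>' y' x'"
  have S1: "finite (supp h1)" "supp h1 \<subseteq> G" using h1 by (auto simp: fin_supp_iff)
  have "target.conv (push h1) (push h2) x' = (\<Sum>y'\<in>q ` supp h1. push h1 y' * ?F y')"
    using S1 hom_closed supp_pushforward_subset[OF h1] x'
    by (subst target.conv_eq_sum[of "q ` supp h1"]) (auto simp: mult.assoc)
  also have "\<dots> = (\<Sum>y'\<in>q ` supp h1. \<Sum>y\<in>{y\<in>supp h1. q y = y'}. h1 y * ?F (q y))"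
    using S1 hom_closed
    by (intro sum.cong refl) (auto simp: pushforward_eq_fiber_sum[OF h1] sum_distrib_right)
  also have "\<dots> = (\<Sum>y\<in>supp h1. h1 y * ?F (q y))"
    using S1 by (intro sum.group) auto
  finally show ?thesis by (simp add: mult.assoc)
qed

lemma pushforward_conv_eq_sum:
  assumes h1: "fin_supp G h1" and h2: "fin_supp G h2" and x': "x' \<in> G'"
  shows "push (conv h1 h2) x'
    = (\<Sum>y\<in>supp h1. h1 y * push h2 (mul' (iv' (q y)) x') * \<sigma>' (q y) x')"
proof -
  define W where "W = set_mul (supp h1) (supp h2)"
  have S1: "finite (supp h1)" "supp h1 \<subseteq> G" and S2: "finite (supp h2)" "supp h2 \<subseteq> G"
    using h1 h2 by (auto simp: fin_supp_iff)
  have W: "finite W" "W \<subseteq> G"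
    using S1 S2 by (auto simp: W_def finite_set_mul set_mul_subset)
  have "push (conv h1 h2) x' = (\<Sum>w\<in>W. if q w = x' then conv h1 h2 w else 0)"
    using fin_supp_conv[OF h1 h2] x' W supp_conv_subset[OF h1]
    by (intro pushforward_eq_sum) (auto simp: W_def)
  also have "\<dots> = (\<Sum>w\<in>W. \<Sum>y\<in>supp h1.
      if q w = x' then h1 y * h2 (mul (iv y) w) * \<sigma>' (q y) (q w) else 0)"
  proof (rule sum.cong[OF refl])
    fix w assume "w \<in> W"
    then have "conv h1 h2 w = (\<Sum>y\<in>supp h1. h1 y * h2 (mul (iv y) w) * \<sigma>' (q y) (q w))"
      using W S1 by (intro conv_eq_sum) auto
    then show "(if q w = x' then conv h1 h2 w else 0) = (\<Sum>y\<in>supp h1.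
        if q w = x' then h1 y * h2 (mul (iv y) w) * \<sigma>' (q y) (q w) else 0)"
      by simp
  qed
  also have "\<dots> = (\<Sum>y\<in>supp h1. \<Sum>w\<in>W.
      if q w = x' then h1 y * h2 (mul (iv y) w) * \<sigma>' (q y) (q w) else 0)"
    by (rule sum.swap)
  also have "\<dots> = (\<Sum>y\<in>supp h1. h1 y * push h2 (mul' (iv' (q y)) x') * \<sigma>' (q y) x')"
  proof (rule sum.cong[OF refl])
    fix y assume "y \<in> supp h1"
    then have y: "y \<in> G" "y \<in> supp h1" using S1 by auto
    define F where "F = (\<lambda>w. if q w = x' then h1 y * h2 (mul (iv y) w) * \<sigma>' (q y) (q w) else 0)"
    have "sum F W = (\<Sum>z\<in>supp h2. F (mul y z))"
    proof (rule sum_reindex_bij_betw_vanishing[OF bij_betw_mul_left[OF y(1)] W S2])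
      fix w assume w: "w \<in> G" "w \<notin> W"
      have "mul (iv y) w \<notin> supp h2"
      proof
        assume "mul (iv y) w \<in> supp h2"
        then have "mul y (mul (iv y) w) \<in> W"
          unfolding W_def by (rule mul_in_set_mul[OF y(2)])
        then show False using w y by simp
      qed
      then show "F w = 0" by (simp add: F_def supp_def)
    next
      fix z assume "z \<in> G" "z \<notin> supp h2"
      then show "F (mul y z) = 0" using y by (simp add: F_def supp_def)
    qed
    also have "\<dots> = (\<Sum>z\<in>supp h2. h1 y * (if q z = mul' (iv' (q y)) x' then h2 z else 0)
        * \<sigma>' (q y) x')"
    proof (rule sum.cong[OF refl])
      fix z assume "z \<in> supp h2"
      then have "q (mul y z) = x' \<longleftrightarrow> q z = mul' (iv' (q y)) x'"
        using y S2 x' by (intro hom_mul_eq_iff) auto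
      then show "F (mul y z)
          = h1 y * (if q z = mul' (iv' (q y)) x' then h2 z else 0) * \<sigma>' (q y) x'"
        using y S2 \<open>z \<in> supp h2\<close> by (auto simp: F_def)
    qed
    also have "\<dots> = h1 y * push h2 (mul' (iv' (q y)) x') * \<sigma>' (q y) x'"
      using h2 y x' hom_closed
      by (simp add: pushforward_eq_sum[of h2 _ "supp h2"] fin_supp_iff sum_distrib_left
          sum_distrib_right)
    finally show "(\<Sum>w\<in>W. if q w = x' then h1 y * h2 (mul (iv y) w) * \<sigma>' (q y) (q w) else 0)
        = h1 y * push h2 (mul' (iv' (q y)) x') * \<sigma>' (q y) x'"
      by (simp only: F_def)
  qed
  finally show ?thesis .
qed

lemma pushforward_conv:
  assumes "fin_supp G h1" "fin_supp G h2"
  shows "push (conv h1 h2) = target.conv (push h1) (push h2)"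
proof
  fix x'
  show "push (conv h1 h2) x' = target.conv (push h1) (push h2) x'"
    using assms by (cases "x' \<in> G'") (simp_all add: pushforward_outside target.conv_outside
        pushforward_conv_eq_sum conv_pushforward_eq_sum)
qed

lemma pushforward_delta: "push delta = target.delta"
proof
  fix x'
  have "{x\<in>supp delta. q x = x'} = (if x' = e' then {e} else {})"
    using hom_e by (auto simp: supp_def delta_def)
  then show "push delta x' = target.delta x'"
    using fin_supp_delta target.e_in
    by (cases "x' \<in> G'") (auto simp: pushforward_outside pushforward_eq_fiber_sum
        delta_def target.delta_def)
qed

lemma pushforward_conv_pow: "fin_supp G h \<Longrightarrow> push (conv_pow h m) = target.conv_pow (push h) m"
  by (induction m) (simp_all add: conv_pow_0 conv_pow_Suc target.conv_pow_0 target.conv_pow_Suc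
      pushforward_delta pushforward_conv fin_supp_conv_pow)

lemma self_adjoint_pushforward:
  assumes h: "fin_supp G h" and sa: "self_adjoint h"
  shows "target.self_adjoint (push h)"
  unfolding target.self_adjoint_def
proof
  fix y' assume y': "y' \<in> G'"
  have S: "finite (supp h)" "supp h \<subseteq> G" using h by (auto simp: fin_supp_iff)
  have h_iv: "h (iv x) = cnj (h x)" if "x \<in> G" for x
    using sa that by (simp add: self_adjoint_def)
  have "{x\<in>supp h. q x = iv' y'} = iv ` {x\<in>supp h. q x = y'}"
  proof (intro equalityI subsetI)
    fix x assume x: "x \<in> {x\<in>supp h. q x = iv' y'}"
    then have "x \<in> G" using S by auto
    then show "x \<in> iv ` {x\<in>supp h. q x = y'}"
      using x y' h_iv by (auto simp: supp_def hom_iv intro!: image_eqI[where x = "iv x"])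
  qed (use S h_iv y' in \<open>auto simp: supp_def hom_iv\<close>)
  moreover have "inj_on iv {x\<in>supp h. q x = y'}"
    using S by (intro inj_on_inverseI[where g = iv]) auto
  ultimately have "push h (iv' y') = (\<Sum>x\<in>{x\<in>supp h. q x = y'}. h (iv x))"
    using h y' by (simp add: pushforward_eq_fiber_sum sum.reindex)
  also have "\<dots> = cnj (push h y')"
    using h y' S h_iv by (simp add: pushforward_eq_fiber_sum subset_iff)
  finally show "push h (iv' y') = cnj (push h y')" .
qed

lemma l2norm_conv_le_cstar_norm_pushforward:
  assumes f: "fin_supp G f" and \<xi>: "fin_supp G \<xi>" "l2norm \<xi> \<le> 1"
    and inj: "inj_on q (supp \<xi> \<union> set_mul (supp f) (supp \<xi>))"
  shows "l2norm (conv f \<xi>) \<le> target.cstar_norm (push f)"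
proof -
  have "l2norm (conv f \<xi>) = l2norm (push (conv f \<xi>))"
    using inj supp_conv_subset[OF f, of \<xi>]
    by (intro l2norm_pushforward_inj[symmetric] fin_supp_conv f \<xi>) (auto intro: inj_on_subset)
  also have "\<dots> = l2norm (target.conv (push f) (push \<xi>))"
    by (simp add: pushforward_conv f \<xi>)
  also have "\<dots> \<le> target.cstar_norm (push f)"
  proof (intro target.l2norm_conv_le_cstar_norm fin_supp_pushforward f \<xi>(1))
    have "inj_on q (supp \<xi>)" using inj by (rule inj_on_subset) simp
    then show "l2norm (push \<xi>) \<le> 1" using \<xi> by (simp add: l2norm_pushforward_inj)
  qed
  finally show ?thesis .
qed

lemma cstar_norm_pushforward_pow2_le:
  assumes "fin_supp G f" "self_adjoint f"
  shows "target.cstar_norm (push f) ^ 2 ^ j \<le> l1_norm (conv_pow f (2 ^ j))"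
proof -
  have "target.cstar_norm (push f) ^ 2 ^ j \<le> l1_norm (target.conv_pow (push f) (2 ^ j))"
    using assms by (intro target.cstar_norm_pow2_le_l1_norm fin_supp_pushforward self_adjoint_pushforward)
  also have "\<dots> \<le> l1_norm (conv_pow f (2 ^ j))"
    using assms by (simp add: pushforward_conv_pow[symmetric] l1_norm_pushforward_le fin_supp_conv_pow)
  finally show ?thesis .
qed

end

section \<open>Characters\<close>

lemma dual_groupD:
  assumes "\<kappa> \<in> dual_group"
  shows "continuous_on UNIV \<kappa>" "cmod (\<kappa> x) = 1" "\<kappa> (x + y) = \<kappa> x * \<kappa> y"
  using assms unfolding dual_group_def by auto

lemma one_in_dual_group: "(\<lambda>_. 1) \<in> dual_group"
  by (simp add: dual_group_def)

lemma mult_in_dual_group: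
  "\<kappa> \<in> dual_group \<Longrightarrow> \<psi> \<in> dual_group \<Longrightarrow> (\<lambda>x. \<kappa> x * \<psi> x) \<in> dual_group"
  by (auto simp: dual_group_def norm_mult intro: continuous_on_mult)

lemma cnj_in_dual_group: "\<kappa> \<in> dual_group \<Longrightarrow> (\<lambda>x. cnj (\<kappa> x)) \<in> dual_group"
  by (auto simp: dual_group_def intro: continuous_on_cnj)

lemma qmap_in_qdual: "\<kappa> \<in> dual_group \<Longrightarrow> qmap H \<kappa> \<in> qdual H"
  by (simp add: qdual_def)

lemma chmul_qmap: "chmul H (qmap H \<kappa>) (qmap H \<psi>) = qmap H (\<lambda>x. \<kappa> x * \<psi> x)"
  by (auto simp: chmul_def qmap_def)

lemma chinv_qmap: "chinv H (qmap H \<kappa>) = qmap H (\<lambda>x. cnj (\<kappa> x))"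
  by (auto simp: chinv_def qmap_def)

lemma qmap_UNIV: "qmap UNIV \<kappa> = \<kappa>"
  by (simp add: qmap_def restrict_UNIV)

lemma chmul_UNIV: "chmul UNIV \<kappa> \<psi> = (\<lambda>x. \<kappa> x * \<psi> x)"
  by (simp add: chmul_def restrict_UNIV)

lemma qdual_UNIV: "qdual UNIV = dual_group"
  by (simp add: qdual_def qmap_UNIV)

lemma abelian_group_on_qdual:
  "abelian_group_on (qdual H) (chmul H) (chinv H) (qmap H (\<lambda>_. 1))"
proof
  show "qmap H (\<lambda>_. 1) \<in> qdual H"
    by (rule qmap_in_qdual[OF one_in_dual_group])
next
  fix x y assume "x \<in> qdual H" "y \<in> qdual H"
  then show "chmul H x y \<in> qdual H"
    by (auto simp: qdual_def chmul_qmap intro!: qmap_in_qdual mult_in_dual_group)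
next
  fix x assume "x \<in> qdual H"
  then show "chinv H x \<in> qdual H"
    by (auto simp: qdual_def chinv_qmap intro!: qmap_in_qdual cnj_in_dual_group)
next
  fix x y z :: "'a \<Rightarrow> complex"
  show "chmul H (chmul H x y) z = chmul H x (chmul H y z)"
    and "chmul H x y = chmul H y x"
    by (auto simp: chmul_def)
next
  fix x assume "x \<in> qdual H"
  then obtain \<kappa> where \<kappa>: "\<kappa> \<in> dual_group" "x = qmap H \<kappa>"
    by (auto simp: qdual_def)
  then show "chmul H (qmap H (\<lambda>_. 1)) x = x"
    by (simp add: chmul_qmap)
  have "cnj (\<kappa> t) * \<kappa> t = 1" for t
    using unimodular_mult_cnj[OF dual_groupD(2)[OF \<kappa>(1)]] by (simp add: mult.commute)
  then show "chmul H (chinv H x) x = qmap H (\<lambda>_. 1)"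
    using \<kappa> by (simp add: chinv_qmap chmul_qmap)
qed

lemma abelian_group_on_dual_group:
  "abelian_group_on dual_group (chmul UNIV) (chinv UNIV) (\<lambda>_. 1)"
  using abelian_group_on_qdual[of UNIV] by (simp add: qdual_UNIV qmap_UNIV)

lemma twisted_hom_qmap:
  assumes "skew_bichar (qdual H) (chmul H) \<sigma>"
  shows "twisted_hom dual_group (chmul UNIV) (chinv UNIV) (\<lambda>_. 1)
    (qdual H) (chmul H) (chinv H) (qmap H (\<lambda>_. 1)) \<sigma> (qmap H)"
proof (intro twisted_hom.intro twisted_hom_axioms.intro twisted_abelian_group.intro
    twisted_abelian_group_axioms.intro abelian_group_on_dual_group abelian_group_on_qdual assms)
  fix \<kappa> \<psi> :: "'a \<Rightarrow> complex"
  show "\<kappa> \<in> dual_group \<Longrightarrow> qmap H \<kappa> \<in> qdual H"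
    by (rule qmap_in_qdual)
  show "qmap H (chmul UNIV \<kappa> \<psi>) = chmul H (qmap H \<kappa>) (qmap H \<psi>)"
    by (simp add: chmul_qmap chmul_UNIV)
qed

lemma theta_eq_pushforward: "theta H = pushforward dual_group (qdual H) (qmap H)"
  by (simp add: fun_eq_iff theta_def pushforward_def)

section \<open>Convergence of twists\<close>

lemma powr_pow_pow_eq_sqrt:
  fixes m k :: nat
  assumes "0 < m"
  shows "(((real m + 1) powr (1 / (2 * m))) ^ k) ^ m = sqrt ((real m + 1) ^ k)"
proof -
  have "(((real m + 1) powr (1 / (2 * m))) ^ k) ^ m = (real m + 1) powr (1 / (2 * m) * k * m)"
    by (simp add: powr_realpow[symmetric] powr_powr power_mult[symmetric] ac_simps)
  also have "1 / (2 * m) * k * m = k / 2"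
    using assms by (simp add: field_simps)
  also have "(real m + 1) powr (k / 2) = sqrt ((real m + 1) ^ k)"
    by (simp add: powr_half_sqrt[symmetric] powr_realpow[symmetric] powr_powr)
  finally show ?thesis .
qed

lemma exists_pow2_poly_bound:
  fixes N c :: real
  assumes "0 \<le> N" "N < c"
  shows "\<exists>j. sqrt ((real (2 ^ j) + 1) ^ k) * N ^ 2 ^ j < c ^ 2 ^ j"
proof -
  define C where "C j = ((real (2 ^ j) + 1) powr (1 / (2 * 2 ^ j))) ^ k" for j :: nat
  have "(\<lambda>j::nat. (2 ^ j + 1 :: real) powr (1 / (2 * 2 ^ j))) \<longlonglongrightarrow> 1"
    by real_asymp
  then have "(\<lambda>j. C j * N) \<longlonglongrightarrow> 1 ^ k * N"
    unfolding C_def by (intro tendsto_intros) simp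
  then have "eventually (\<lambda>j. C j * N < c) sequentially"
    using assms(2) by (intro order_tendstoD(2)) auto
  then obtain j where j: "C j * N < c"
    using eventually_happens'[OF sequentially_bot] by blast
  have "(C j * N) ^ 2 ^ j < c ^ 2 ^ j"
    using j assms by (intro power_strict_mono) (auto simp: C_def)
  moreover have "C j ^ 2 ^ j = sqrt ((real (2 ^ j) + 1) ^ k)"
    unfolding C_def using powr_pow_pow_eq_sqrt[of "2 ^ j" k] by simp
  ultimately show ?thesis by (auto simp: power_mult_distrib)
qed

locale twist_convergence = abelian_group_on G mul iv e
  for G :: "'c set" and mul iv e +
  fixes \<sigma> :: "'c \<Rightarrow> 'c \<Rightarrow> complex"
    and G' :: "nat \<Rightarrow> 'd set" and mul' :: "nat \<Rightarrow> 'd \<Rightarrow> 'd \<Rightarrow> 'd" and iv' :: "nat \<Rightarrow> 'd \<Rightarrow> 'd"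
    and e' :: "nat \<Rightarrow> 'd" and \<sigma>' :: "nat \<Rightarrow> 'd \<Rightarrow> 'd \<Rightarrow> complex" and q :: "nat \<Rightarrow> 'c \<Rightarrow> 'd"
  assumes limit_skew: "skew_bichar G mul \<sigma>"
    and stage_hom: "twisted_hom G mul iv e (G' n) (mul' n) (iv' n) (e' n) (\<sigma>' n) (q n)"
    and twist_tendsto: "x \<in> G \<Longrightarrow> y \<in> G \<Longrightarrow> (\<lambda>n. \<sigma>' n (q n x) (q n y)) \<longlonglongrightarrow> \<sigma> x y"
    and eventually_inj_on: "finite S \<Longrightarrow> S \<subseteq> G \<Longrightarrow> eventually (\<lambda>n. inj_on (q n) S) sequentially"
begin

sublocale limit: twisted_abelian_group G mul iv e \<sigma>
  by unfold_locales (rule limit_skew)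

abbreviation twist :: "nat \<Rightarrow> 'c \<Rightarrow> 'c \<Rightarrow> complex" where
  "twist n \<equiv> \<lambda>x y. \<sigma>' n (q n x) (q n y)"

abbreviation stage_conv_pow :: "nat \<Rightarrow> ('c \<Rightarrow> complex) \<Rightarrow> nat \<Rightarrow> 'c \<Rightarrow> complex" where
  "stage_conv_pow n \<equiv> twisted_abelian_group.conv_pow G mul iv e (twist n)"

abbreviation stage_norm :: "nat \<Rightarrow> ('d \<Rightarrow> complex) \<Rightarrow> real" where
  "stage_norm n \<equiv> twisted_cstar_norm (G' n) (mul' n) (iv' n) (\<sigma>' n)"

lemma twisted_abelian_group_stage: "twisted_abelian_group G mul iv e (twist n)"
  by (rule twisted_hom.twisted_abelian_group_pullback[OF stage_hom])

lemma tendsto_twconv_stage: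
  assumes "fin_supp G a" "\<And>x. x \<in> G \<Longrightarrow> (\<lambda>n. \<xi> n x) \<longlonglongrightarrow> \<eta> x"
  shows "(\<lambda>n. twconv G mul iv (twist n) a (\<xi> n) x) \<longlonglongrightarrow> limit.conv a \<eta> x"
  using assms by (intro tendsto_twconv twist_tendsto) (auto simp: fin_supp_iff supp_def
      intro: finite_subset)

lemma tendsto_stage_conv_pow:
  assumes "fin_supp G a"
  shows "(\<lambda>n. stage_conv_pow n a m x) \<longlonglongrightarrow> limit.conv_pow a m x"
proof (induction m arbitrary: x)
  case 0
  then show ?case
    using twisted_abelian_group.conv_pow_0[OF twisted_abelian_group_stage]
      twisted_abelian_group.delta_def[OF twisted_abelian_group_stage]
    by (simp add: limit.conv_pow_0 limit.delta_def)
next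
  case (Suc m)
  then show ?case
    unfolding twisted_abelian_group.conv_pow_Suc[OF twisted_abelian_group_stage] limit.conv_pow_Suc
    by (intro tendsto_twconv_stage[OF assms])
qed

lemma eventually_cstar_norm_pushforward_less:
  assumes a: "fin_supp G a" "limit.self_adjoint a" and c: "limit.cstar_norm a < c"
  shows "eventually (\<lambda>n. stage_norm n (pushforward G (G' n) (q n) a) < c) sequentially"
proof -
  have N: "0 \<le> limit.cstar_norm a" by (rule limit.cstar_norm_nonneg[OF a(1)])
  then obtain j where j: "sqrt ((real (2 ^ j) + 1) ^ card (supp a)) * limit.cstar_norm a ^ 2 ^ j
      < c ^ 2 ^ j"
    using exists_pow2_poly_bound[OF N c] by blast
  let ?m = "2 ^ j :: nat"
  have "l1_norm (limit.conv_pow a ?m) < c ^ ?m"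
    using limit.l1_norm_conv_pow_le[OF a(1), of ?m] j by linarith
  moreover have "(\<lambda>n. l1_norm (stage_conv_pow n a ?m)) \<longlonglongrightarrow> l1_norm (limit.conv_pow a ?m)"
    using a(1) twisted_abelian_group.supp_conv_pow_subset[OF twisted_abelian_group_stage]
      limit.supp_conv_pow_subset
    by (intro tendsto_l1_norm_common_support[of "products (supp a) ?m"] tendsto_stage_conv_pow)
      (auto simp: fin_supp_iff finite_products)
  ultimately have "eventually (\<lambda>n. l1_norm (stage_conv_pow n a ?m) < c ^ ?m) sequentially"
    by (rule order_tendstoD(2)[rotated])
  then show ?thesis
  proof (rule eventually_mono)
    fix n assume less: "l1_norm (stage_conv_pow n a ?m) < c ^ ?m"
    interpret twisted_hom G mul iv e "G' n" "mul' n" "iv' n" "e' n" "\<sigma>' n" "q n"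
      by (rule stage_hom)
    have "stage_norm n (push a) ^ ?m < c ^ ?m"
      using cstar_norm_pushforward_pow2_le[OF a, of j] less by simp
    then show "stage_norm n (push a) < c"
      by (rule power_less_imp_less_base) (use N c in linarith)
  qed
qed

lemma eventually_less_cstar_norm_pushforward:
  assumes a: "fin_supp G a" and c: "c < limit.cstar_norm a"
  shows "eventually (\<lambda>n. c < stage_norm n (pushforward G (G' n) (q n) a)) sequentially"
proof -
  obtain \<xi> where \<xi>: "fin_supp G \<xi>" "l2norm \<xi> \<le> 1" and c\<xi>: "c < l2norm (limit.conv a \<xi>)"
    using c limit.bdd_above_conv_unit_ball[OF a] limit.fin_supp_zero
    unfolding twisted_cstar_norm_def by (subst (asm) less_cSUP_iff) auto
  define A where "A = set_mul (supp a) (supp \<xi>)"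
  have A: "finite A" "A \<subseteq> G" "finite (supp \<xi>)" "supp \<xi> \<subseteq> G"
    using a \<xi> by (auto simp: A_def fin_supp_iff finite_set_mul set_mul_subset)
  have "(\<lambda>n. l2norm (twconv G mul iv (twist n) a \<xi>)) \<longlonglongrightarrow> l2norm (limit.conv a \<xi>)"
    using twisted_abelian_group.supp_conv_subset[OF twisted_abelian_group_stage a]
      limit.supp_conv_subset[OF a]
    by (intro tendsto_l2norm_common_support[OF A(1)] tendsto_twconv_stage a) (auto simp: A_def)
  then have "eventually (\<lambda>n. c < l2norm (twconv G mul iv (twist n) a \<xi>)) sequentially"
    using c\<xi> by (rule order_tendstoD(1))
  moreover have "eventually (\<lambda>n. inj_on (q n) (supp \<xi> \<union> A)) sequentially"
    using A by (intro eventually_inj_on) auto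
  ultimately show ?thesis
  proof (rule eventually_elim2)
    fix n assume less: "c < l2norm (twconv G mul iv (twist n) a \<xi>)"
      and inj: "inj_on (q n) (supp \<xi> \<union> A)"
    interpret twisted_hom G mul iv e "G' n" "mul' n" "iv' n" "e' n" "\<sigma>' n" "q n"
      by (rule stage_hom)
    have "l2norm (conv a \<xi>) \<le> stage_norm n (push a)"
      using l2norm_conv_le_cstar_norm_pushforward[OF a \<xi>] inj by (simp add: A_def)
    then show "c < stage_norm n (push a)"
      using less by linarith
  qed
qed

theorem tendsto_cstar_norm_pushforward:
  assumes "fin_supp G a" "limit.self_adjoint a"
  shows "(\<lambda>n. stage_norm n (pushforward G (G' n) (q n) a)) \<longlonglongrightarrow> limit.cstar_norm a"
  using assms
  by (intro order_tendstoI eventually_less_cstar_norm_pushforward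
      eventually_cstar_norm_pushforward_less)

end

section \<open>Subgroups converging to the whole group\<close>

lemma length_fun_bounded_below_off_compact:
  fixes l :: "'g::{topological_group_add, ab_group_add} \<Rightarrow> real"
  assumes l: "length_fun l" "continuous_on UNIV l" and Z: "compact Z" "g \<notin> Z"
  shows "\<exists>\<delta>>0. \<forall>z\<in>Z. \<delta> \<le> l (- z + g)"
proof (cases "Z = {}")
  case True
  then show ?thesis by (intro exI[of _ "1 :: real"]) simp
next
  case False
  have "continuous_on Z (\<lambda>z. l (- z + g))"
    by (rule continuous_on_compose2[OF l(2)]) (auto intro!: continuous_intros)
  then obtain z0 where z0: "z0 \<in> Z" "\<And>z. z \<in> Z \<Longrightarrow> l (- z0 + g) \<le> l (- z + g)"
    using continuous_attains_inf[OF Z(1) False] by blast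
  have "- z0 + g \<noteq> 0"
    using add_minus_cancel[of z0 g] z0(1) Z(2) by auto
  then have "0 \<le> l (- z0 + g)" "l (- z0 + g) \<noteq> 0"
    using l(1) unfolding length_fun_def by auto
  then have "0 < l (- z0 + g)" by simp
  then show ?thesis using z0(2) by (intro exI[of _ "l (- z0 + g)"]) simp
qed

lemma hausdorff_dl_less_imp_near:
  fixes l :: "'g::ab_group_add \<Rightarrow> real"
  assumes l: "\<And>x. 0 \<le> l x" "bdd_above (range l)" and A: "A \<noteq> {}"
    and less: "hausdorff_dl l A UNIV < \<delta>"
  shows "\<exists>a\<in>A. l (- a + g) < \<delta>"
proof -
  obtain M where M: "\<And>x. l x \<le> M" using l(2) by (auto simp: bdd_above_def)
  obtain a0 where a0: "a0 \<in> A" using A by blast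
  have bdd_below: "bdd_below ((\<lambda>a. l (- a + b)) ` A)" for b
    using l(1) by (intro bdd_belowI2) auto
  have "(INF a\<in>A. l (- a + b)) \<le> M" for b
    using cINF_lower[OF bdd_below a0, of b] M[of "- a0 + b"] by linarith
  then have "bdd_above ((\<lambda>b. INF a\<in>A. l (- a + b)) ` UNIV)"
    by (intro bdd_aboveI2) auto
  then have "(INF a\<in>A. l (- a + g)) \<le> (SUP b\<in>UNIV. INF a\<in>A. l (- a + b))"
    by (rule cSUP_upper[OF UNIV_I])
  also have "\<dots> \<le> hausdorff_dl l A UNIV"
    unfolding hausdorff_dl_def by simp
  finally have "(INF a\<in>A. l (- a + g)) < \<delta>" using less by simp
  then show ?thesis using cINF_less_iff[OF A bdd_below] by blast
qed

text \<open>Compactness of \<open>G\<close> is what makes small \<open>d\<^sub>l\<close>-distance imply topological closeness.\<close>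

lemma eventually_meets_open:
  fixes l :: "'g::{topological_group_add, ab_group_add} \<Rightarrow> real" and H :: "nat \<Rightarrow> 'g set"
  assumes G: "compact (UNIV :: 'g set)" and l: "length_fun l" "continuous_on UNIV l"
    and H: "\<And>n. H n \<noteq> {}" "(\<lambda>n. hausdorff_dl l (H n) UNIV) \<longlonglongrightarrow> 0"
    and U: "open U" "g \<in> U"
  shows "eventually (\<lambda>n. H n \<inter> U \<noteq> {}) sequentially"
proof -
  have "compact (- U)"
    using G U(1) by (metis closed_Compl compact_Int_closed inf_top_left)
  then obtain \<delta> where \<delta>: "0 < \<delta>" "\<And>z. z \<notin> U \<Longrightarrow> \<delta> \<le> l (- z + g)"
    using length_fun_bounded_below_off_compact[OF l, of "- U" g] U(2) by auto
  have "bdd_above (range l)"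
    using compact_continuous_image[OF l(2) G] by (intro bounded_imp_bdd_above compact_imp_bounded)
  moreover have "\<And>x. 0 \<le> l x" using l(1) by (simp add: length_fun_def)
  ultimately have near: "hausdorff_dl l (H n) UNIV < \<delta> \<Longrightarrow> \<exists>a\<in>H n. l (- a + g) < \<delta>" for n
    using H(1) by (intro hausdorff_dl_less_imp_near) auto
  have "eventually (\<lambda>n. hausdorff_dl l (H n) UNIV < \<delta>) sequentially"
    using H(2) \<delta>(1) by (rule order_tendstoD(2))
  then show ?thesis
  proof (rule eventually_mono)
    fix n assume "hausdorff_dl l (H n) UNIV < \<delta>"
    then obtain a where a: "a \<in> H n" "l (- a + g) < \<delta>" using near by blast
    then have "a \<in> U" using \<delta>(2)[of a] by linarith
    then show "H n \<inter> U \<noteq> {}" using a(1) by blast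
  qed
qed

lemma eventually_inj_on_qmap:
  fixes l :: "'g::{topological_group_add, ab_group_add} \<Rightarrow> real" and H :: "nat \<Rightarrow> 'g set"
  assumes G: "compact (UNIV :: 'g set)" and l: "length_fun l" "continuous_on UNIV l"
    and H: "\<And>n. H n \<noteq> {}" "(\<lambda>n. hausdorff_dl l (H n) UNIV) \<longlonglongrightarrow> 0"
    and S: "finite S" "S \<subseteq> dual_group"
  shows "eventually (\<lambda>n. inj_on (qmap (H n)) S) sequentially"
proof -
  have "eventually (\<lambda>n. \<forall>\<kappa>1\<in>S. \<forall>\<kappa>2\<in>S. \<kappa>1 \<noteq> \<kappa>2 \<longrightarrow> H n \<inter> {x. \<kappa>1 x \<noteq> \<kappa>2 x} \<noteq> {}) sequentially"
  proof (intro eventually_ball_finite S(1) ballI)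
    fix \<kappa>1 \<kappa>2 assume \<kappa>: "\<kappa>1 \<in> S" "\<kappa>2 \<in> S"
    show "eventually (\<lambda>n. \<kappa>1 \<noteq> \<kappa>2 \<longrightarrow> H n \<inter> {x. \<kappa>1 x \<noteq> \<kappa>2 x} \<noteq> {}) sequentially"
    proof (cases "\<kappa>1 = \<kappa>2")
      case False
      then obtain g where "\<kappa>1 g \<noteq> \<kappa>2 g" by blast
      moreover have "open {x. \<kappa>1 x \<noteq> \<kappa>2 x}"
        using \<kappa> S(2) by (intro open_Collect_neq) (auto dest: dual_groupD(1))
      ultimately have "eventually (\<lambda>n. H n \<inter> {x. \<kappa>1 x \<noteq> \<kappa>2 x} \<noteq> {}) sequentially"
        by (intro eventually_meets_open[OF G l H]) simp_all
      then show ?thesis by (rule eventually_mono) simp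
    qed simp
  qed
  then show ?thesis
  proof (rule eventually_mono)
    fix n assume sep: "\<forall>\<kappa>1\<in>S. \<forall>\<kappa>2\<in>S. \<kappa>1 \<noteq> \<kappa>2 \<longrightarrow> H n \<inter> {x. \<kappa>1 x \<noteq> \<kappa>2 x} \<noteq> {}"
    show "inj_on (qmap (H n)) S"
    proof (rule inj_onI)
      fix \<kappa>1 \<kappa>2 assume "\<kappa>1 \<in> S" "\<kappa>2 \<in> S" "qmap (H n) \<kappa>1 = qmap (H n) \<kappa>2"
      moreover from this(3) have "\<forall>h\<in>H n. \<kappa>1 h = \<kappa>2 h"
        unfolding qmap_def by (metis restrict_apply')
      ultimately show "\<kappa>1 = \<kappa>2" using sep by blast
    qed
  qed
qed

theorem mainTheorem12:
  fixes l :: "'g::{topological_group_add, ab_group_add} \<Rightarrow> real"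
    and H :: "nat \<Rightarrow> 'g set"
    and lam :: "nat \<Rightarrow> 'g measure" and lam_inf :: "'g measure"
    and \<sigma> :: "nat \<Rightarrow> ('g \<Rightarrow> complex) \<Rightarrow> ('g \<Rightarrow> complex) \<Rightarrow> complex"
    and \<sigma>_inf :: "('g \<Rightarrow> complex) \<Rightarrow> ('g \<Rightarrow> complex) \<Rightarrow> complex"
    and \<epsilon> :: real
    and c :: "('g \<Rightarrow> complex) \<Rightarrow> complex"
    and \<phi> :: "'g \<Rightarrow> complex"
    and B :: "('g \<Rightarrow> complex) set"
    and N :: nat
    and a :: "('g \<Rightarrow> complex) \<Rightarrow> complex"
  assumes compact_G: "compact (UNIV :: 'g set)"
    and l_len: "length_fun l" and l_cont: "continuous_on UNIV l"
    and H_sub: "\<And>n. is_subgroup (H n)" and H_closed: "\<And>n. closed (H n)"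
    and H_conv: "(\<lambda>n. hausdorff_dl l (H n) UNIV) \<longlonglongrightarrow> 0"
    and lam_haar: "\<And>n. haar_prob (H n) (lam n)"
    and lam_inf_haar: "haar_prob UNIV lam_inf"
    and \<sigma>_skew: "\<And>n. skew_bichar (qdual (H n)) (chmul (H n)) (\<sigma> n)"
    and \<sigma>_inf_skew: "skew_bichar (qdual UNIV) (chmul UNIV) \<sigma>_inf"
    and \<sigma>_conv: "\<And>\<kappa> \<kappa>'. \<kappa> \<in> dual_group \<Longrightarrow> \<kappa>' \<in> dual_group \<Longrightarrow>
        (\<lambda>n. \<sigma> n (qmap (H n) \<kappa>) (qmap (H n) \<kappa>')) \<longlonglongrightarrow> \<sigma>_inf \<kappa> \<kappa>'"
    and \<epsilon>_pos: "\<epsilon> > 0"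
    and B_def: "B = {\<kappa>. c \<kappa> \<noteq> 0}"
    and B_fin: "finite B" and B_dual: "B \<subseteq> dual_group"
    and \<phi>_def: "\<phi> = (\<lambda>g. \<Sum>\<kappa>\<in>B. c \<kappa> * \<kappa> g)"
    and \<phi>_nonneg: "\<And>g. \<phi> g \<in> \<real> \<and> Re (\<phi> g) \<ge> 0"
    and \<phi>_int: "(\<integral>g. Re (\<phi> g) \<partial>lam_inf) = 1"
    and \<phi>_l: "(\<integral>g. Re (\<phi> g) * l g \<partial>lam_inf) \<le> \<epsilon> / (3 * (1 + \<epsilon>))"
    and N_prop: "\<And>n. n \<ge> N \<Longrightarrow> inj_on (qmap (H n)) B \<and> (\<integral>g. Re (\<phi> g) \<partial>lam n) \<ge> 1 / (1 + \<epsilon>)"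
    and a_supp: "{\<kappa>. a \<kappa> \<noteq> 0} \<subseteq> B"
    and a_sa: "\<And>\<kappa>. \<kappa> \<in> dual_group \<Longrightarrow> a \<kappa> = twstar (chinv UNIV) \<sigma>_inf a \<kappa>"
  shows "(\<lambda>n. twisted_cstar_norm (qdual (H n)) (chmul (H n)) (chinv (H n)) (\<sigma> n) (theta (H n) a))
           \<longlonglongrightarrow> twisted_cstar_norm dual_group (chmul UNIV) (chinv UNIV) \<sigma>_inf a"
proof -
  interpret twist_convergence dual_group "chmul UNIV" "chinv UNIV" "\<lambda>_. 1" \<sigma>_inf
    "\<lambda>n. qdual (H n)" "\<lambda>n. chmul (H n)" "\<lambda>n. chinv (H n)" "\<lambda>n. qmap (H n) (\<lambda>_. 1)" \<sigma>
    "\<lambda>n. qmap (H n)"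
  proof (intro twist_convergence.intro twist_convergence_axioms.intro abelian_group_on_dual_group
      twisted_hom_qmap \<sigma>_skew \<sigma>_conv)
    show "skew_bichar dual_group (chmul UNIV) \<sigma>_inf"
      using \<sigma>_inf_skew by (simp add: qdual_UNIV)
    have "H n \<noteq> {}" for n
      using H_sub[of n] by (auto simp: is_subgroup_def)
    then show "finite S \<Longrightarrow> S \<subseteq> dual_group \<Longrightarrow> eventually (\<lambda>n. inj_on (qmap (H n)) S) sequentially"
      for S
      by (rule eventually_inj_on_qmap[OF compact_G l_len l_cont _ H_conv])
  qed
  have "fin_supp dual_group a"
    using a_supp B_fin B_dual by (auto simp: fin_supp_iff supp_def intro: finite_subset)
  moreover have "limit.self_adjoint a"
    using a_sa by (simp add: limit.self_adjoint_iff_twstar)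
  ultimately show ?thesis
    using tendsto_cstar_norm_pushforward by (simp add: theta_eq_pushforward)
qed

end
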